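(* Let $\Sigma=\{xtyxsy\approx xtxyxsy,\ xtysyx\approx xtysxyx\}$ and let $M$ be a monoid such that $xy$ is an isoterm for $M$ and $M$ satisfies $\Sigma$. Then for every identity $\mathbf u\approx\mathbf v$ of $M$ there is a compact well-balanced identity $\sigma$ of $M$ such that $\mathbf u\approx\mathbf v$ is a consequence of $\{\sigma\}\cup\Sigma\cup\Gamma(M)$.
   Context: Words are elements of the free monoid over a countably infinite alphabet. A word $\mathbf w$ is an isoterm for $M$ if $M$ satisfies no identity $\mathbf w\approx\mathbf w'$ with $\mathbf w'\ne\mathbf w$. A letter is simple in $\mathbf w$ if it occurs once, multiple if it occurs at least twice; $\mathrm{simp}(\mathbf w)$, $\mathrm{mul}(\mathbf w)$ denote these sets. For a set $X$ of letters, $\mathbf w(X)$ is obtained from $\mathbf w$ by deleting all letters not in $X$; $\mathbf w(x,X)=\mathbf w(X\cup\{x\})$. A block of $\mathbf w$ is a maximal subword containing no letter simple in $\mathbf w$. If $\mathbf u(\mathrm{simp}(\mathbf u))=\mathbf v(\mathrm{simp}(\mathbf v))$, the $i$-th block of $\mathbf u$ and the $i$-th block of $\mathbf v$ (counted between consecutive simple letters, including possibly empty ones) are called corresponding. An identity $\mathbf u\approx\mathbf v$ with $\mathbf u(\mathrm{simp}(\mathbf u))=\mathbf v(\mathrm{simp}(\mathbf v))$ is well-balanced if $\mathbf u(x,\mathrm{simp}(\mathbf u))=\mathbf v(x,\mathrm{simp}(\mathbf u))$ for every $x\in\mathrm{mul}(\mathbf u)$. A word $\mathbf u$ is $x$-compact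 (for $x\in\mathrm{mul}(\mathbf u)$) if the block containing the first occurrence of $x$ contains at most two occurrences of $x$ and every other block contains at most one occurrence of $x$; $\mathbf u$ is compact if it is $x$-compact for all $x\in\mathrm{mul}(\mathbf u)$. An identity $\mathbf u\approx\mathbf v$ is compact if $\mathbf u,\mathbf v$ are compact and $\mathbf u(\mathrm{simp}(\mathbf u))=\mathbf v(\mathrm{simp}(\mathbf v))$. A word is almost-linear if it contains at most one multiple letter; $\Gamma(M)$ is the set of all identities of $M$ both sides of which are almost-linear. *)

theory Defs
  imports Main
begin

type_synonym word = "nat list"
type_synonym identity = "word \<times> word"

definition eval_word :: "(nat \<Rightarrow> 'm::monoid_mult) \<Rightarrow> word \<Rightarrow> 'm" where
  "eval_word h w = prod_list (map h w)"

definition holds :: "'m::monoid_mult itself \<Rightarrow> word \<Rightarrow> word \<Rightarrow> bool" where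
  "holds M u v \<longleftrightarrow> (\<forall>h :: nat \<Rightarrow> 'm. eval_word h u = eval_word h v)"

definition isoterm :: "'m::monoid_mult itself \<Rightarrow> word \<Rightarrow> bool" where
  "isoterm M w \<longleftrightarrow> (\<forall>w'. holds M w w' \<longrightarrow> w' = w)"

definition simp_letters :: "word \<Rightarrow> nat set" where
  "simp_letters w = {x. count_list w x = 1}"

definition mul_letters :: "word \<Rightarrow> nat set" where
  "mul_letters w = {x. 2 \<le> count_list w x}"

definition restr :: "word \<Rightarrow> nat set \<Rightarrow> word" where
  "restr w X = filter (\<lambda>a. a \<in> X) w"

text \<open>Splitting a word at the letters of S (the separators are dropped);
  k separators give k+1 (possibly empty) pieces.\<close>
fun split_at_letters :: "nat set \<Rightarrow> word \<Rightarrow> word list" where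
  "split_at_letters S [] = [[]]"
| "split_at_letters S (a # w) =
     (if a \<in> S then [] # split_at_letters S w
      else (case split_at_letters S w of
              [] \<Rightarrow> [[a]]
            | b # bs \<Rightarrow> (a # b) # bs))"

text \<open>The blocks of w, in order, counted between consecutive simple letters
  (including possibly empty ones).\<close>
definition blocks :: "word \<Rightarrow> word list" where
  "blocks w = split_at_letters (simp_letters w) w"

definition x_compact :: "word \<Rightarrow> nat \<Rightarrow> bool" where
  "x_compact w x \<longleftrightarrow>
     (let bs = blocks w; i = (LEAST i. i < length bs \<and> x \<in> set (bs ! i))
      in \<forall>j < length bs. count_list (bs ! j) x \<le> (if j = i then 2 else 1))"

definition compact :: "word \<Rightarrow> bool" where
  "compact w \<longleftrightarrow> (\<forall>x \<in> mul_letters w. x_compact w x)"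

definition compact_id :: "identity \<Rightarrow> bool" where
  "compact_id \<sigma> \<longleftrightarrow> compact (fst \<sigma>) \<and> compact (snd \<sigma>) \<and>
     restr (fst \<sigma>) (simp_letters (fst \<sigma>)) = restr (snd \<sigma>) (simp_letters (snd \<sigma>))"

definition well_balanced :: "identity \<Rightarrow> bool" where
  "well_balanced \<sigma> \<longleftrightarrow>
     (let u = fst \<sigma>; v = snd \<sigma> in
      restr u (simp_letters u) = restr v (simp_letters v) \<and>
      (\<forall>x \<in> mul_letters u. restr u (insert x (simp_letters u)) = restr v (insert x (simp_letters u))))"

definition almost_linear :: "word \<Rightarrow> bool" where
  "almost_linear w \<longleftrightarrow> card (mul_letters w) \<le> 1"

definition Gamma :: "'m::monoid_mult itself \<Rightarrow> identity set" where
  "Gamma M = {(u, v). holds M u v \<and> almost_linear u \<and> almost_linear v}"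

definition subst :: "(nat \<Rightarrow> word) \<Rightarrow> word \<Rightarrow> word" where
  "subst \<theta> w = concat (map \<theta> w)"

inductive derives :: "identity set \<Rightarrow> word \<Rightarrow> word \<Rightarrow> bool" for \<Sigma> where
  step: "(s, t) \<in> \<Sigma> \<Longrightarrow> derives \<Sigma> (a @ subst \<theta> s @ b) (a @ subst \<theta> t @ b)"
| refl: "derives \<Sigma> u u"
| sym: "derives \<Sigma> u v \<Longrightarrow> derives \<Sigma> v u"
| trans: "derives \<Sigma> u v \<Longrightarrow> derives \<Sigma> v w \<Longrightarrow> derives \<Sigma> u w"

text \<open>Sigma with letters x = 0, y = 1, t = 2, s = 3:
  xtyxsy = xtxyxsy and xtysyx = xtysxyx.\<close>
definition Sigma0 :: "identity set" where
  "Sigma0 = {([0,2,1,0,3,1], [0,2,0,1,0,3,1]), ([0,2,1,3,1,0], [0,2,1,3,0,1,0])}"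

end

(* In a word a x w x c where x occurs in a and every letter of w is multiple, Sigma allows to
   delete the x in front of w; hence every word is Sigma-equivalent to a compact one.  Since
   xy is an isoterm, both sides of an identity of M have the same simple letters in the same
   order, so two compact words u' and v' with M |= u' = v' share the skeleton t_1 ... t_m and
   differ only in how the multiple letters are distributed over the blocks.  For a multiple letter
   x the almost-linear identity u'(x, simp u') = v'(x, simp u') belongs to Gamma(M); substituting
   for each t_i the material between the x-runs of the neighbouring blocks turns it into a
   derivation that moves the occurrences of x in u' to their places in v' and leaves all other
   letters alone.  If the first x-block has the shape x Q x, the factor Q is treated as the image
   of a fresh simple letter.  Doing this for one multiple letter after the other yields compact
   words U and V such that u = U and V = v follow from Sigma and Gamma(M), while U = V is a
   compact well-balanced identity of M. *)

theory Submission
  imports Defs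
begin

lemma eval_word_Nil [simp]: "eval_word h [] = 1"
  by (simp add: eval_word_def)

lemma eval_word_Cons [simp]: "eval_word h (a # w) = h a * eval_word h w"
  by (simp add: eval_word_def)

lemma eval_word_append [simp]: "eval_word h (u @ w) = eval_word h u * eval_word h w"
  by (simp add: eval_word_def)

lemma subst_Nil [simp]: "subst \<theta> [] = []"
  by (simp add: subst_def)

lemma subst_Cons [simp]: "subst \<theta> (a # w) = \<theta> a @ subst \<theta> w"
  by (simp add: subst_def)

lemma subst_append [simp]: "subst \<theta> (u @ w) = subst \<theta> u @ subst \<theta> w"
  by (simp add: subst_def)

lemma subst_id_on: "(\<And>a. a \<in> set w \<Longrightarrow> \<theta> a = [a]) \<Longrightarrow> subst \<theta> w = w"
  by (induction w) auto

lemma subst_replicate_fixed: "\<theta> x = [x] \<Longrightarrow> subst \<theta> (replicate k x) = replicate k x"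
  by (induction k) auto

lemma eval_word_subst: "eval_word h (subst \<theta> w) = eval_word (\<lambda>a. eval_word h (\<theta> a)) w"
  by (induction w) auto

lemma holds_refl: "holds M u u"
  by (simp add: holds_def)

lemma holds_sym: "holds M u v \<Longrightarrow> holds M v u"
  by (simp add: holds_def)

lemma holds_trans: "holds M u v \<Longrightarrow> holds M v w \<Longrightarrow> holds M u w"
  by (simp add: holds_def)

lemma holds_subst: "holds M u v \<Longrightarrow> holds M (subst \<theta> u) (subst \<theta> v)"
  by (simp add: holds_def eval_word_subst)

lemma holds_context: "holds M u v \<Longrightarrow> holds M (a @ u @ b) (a @ v @ b)"
  by (simp add: holds_def)

lemma derives_sound:
  assumes "derives E u v" and "\<forall>(s, t) \<in> E. holds M s t"
  shows "holds M u v"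
  using assms(1)
proof induction
  case (step s t a \<theta> b)
  then have "holds M s t"
    using assms(2) by auto
  then show ?case
    by (intro holds_context holds_subst)
qed (auto intro: holds_refl holds_sym holds_trans)

lemma derives_mono: "derives E u v \<Longrightarrow> E \<subseteq> E' \<Longrightarrow> derives E' u v"
  by (induction rule: derives.induct) (auto intro: derives.intros)

lemma derives_instance:
  "(s, t) \<in> E \<Longrightarrow> u = a @ subst \<theta> s @ b \<Longrightarrow> v = a @ subst \<theta> t @ b \<Longrightarrow> derives E u v"
  using derives.step by blast

lemma derives_member: "(s, t) \<in> E \<Longrightarrow> derives E s t"
  by (rule derives_instance[where a = "[]" and b = "[]" and \<theta> = "\<lambda>a. [a]"])
    (simp_all add: subst_id_on)

declare derives.trans [trans]

lemma holds_if_derives_Sigma0_Gamma: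
  assumes "\<forall>(s, t) \<in> Sigma0. holds M s t" and "derives (Sigma0 \<union> Gamma M) u v"
  shows "holds M u v"
  using derives_sound[OF assms(2)] assms(1) by (auto simp: Gamma_def)

lemma holds_along_derives:
  assumes "\<forall>(s, t) \<in> Sigma0. holds M s t" and "holds M u v"
    and "derives (Sigma0 \<union> Gamma M) u u'" and "derives (Sigma0 \<union> Gamma M) v v'"
  shows "holds M u' v'"
  using holds_if_derives_Sigma0_Gamma[OF assms(1,3)] holds_if_derives_Sigma0_Gamma[OF assms(1,4)] assms(2)
  by (meson holds_sym holds_trans)

lemma count_list_pos_iff: "0 < count_list w x \<longleftrightarrow> x \<in> set w"
  using count_list_0_iff[of w x] by linarith

lemma two_le_count_list_iff: "2 \<le> count_list w x \<longleftrightarrow> x \<in> set w \<and> count_list w x \<noteq> 1"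
  using count_list_0_iff[of w x] by linarith

lemma count_list_replicate_self [simp]: "count_list (replicate k x) x = k"
  by (induction k) auto

lemma count_list_filter: "count_list (filter P w) a = (if P a then count_list w a else 0)"
  by (induction w) auto

lemma distinct_iff_count_list_le_1: "distinct xs \<longleftrightarrow> (\<forall>a. count_list xs a \<le> 1)"
proof (induction xs)
  case (Cons a xs)
  have "(\<forall>b. count_list (a # xs) b \<le> 1) \<longleftrightarrow> a \<notin> set xs \<and> (\<forall>b. count_list xs b \<le> 1)"
    by (metis count_list.simps(2) count_list_0_iff add_le_same_cancel2 le_zero_eq le_add1 order_trans)
  with Cons.IH show ?case
    by simp
qed simp

lemma count_list_distinct: "distinct xs \<Longrightarrow> x \<in> set xs \<Longrightarrow> count_list xs x = 1"
  by (induction xs) auto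

lemma split_first_occurrence:
  assumes "0 < count_list B x"
  obtains L R where "B = L @ x # R" and "x \<notin> set L" and "count_list R x = count_list B x - 1"
proof -
  have "x \<in> set B"
    using assms by (simp add: count_list_pos_iff)
  then obtain L R where B: "B = L @ x # R" and "x \<notin> set L"
    using split_list_first by metis
  moreover have "count_list R x = count_list B x - 1"
    using B \<open>x \<notin> set L\<close> by simp
  ultimately show ?thesis
    by (rule that)
qed

lemma split_two_occurrences:
  assumes "2 \<le> count_list B x"
  obtains L Q R where "B = L @ [x] @ Q @ [x] @ R"
proof -
  have "0 < count_list B x"
    using assms by simp
  then obtain L B' where B: "B = L @ x # B'" and "x \<notin> set L"
    and c: "count_list B' x = count_list B x - 1"
    by (rule split_first_occurrence)
  have "0 < count_list B' x"
    using assms c by simp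
  then obtain Q R where "B' = Q @ x # R"
    by (rule split_first_occurrence)
  then show ?thesis
    using that B by simp
qed

lemma split_three_occurrences:
  assumes "3 \<le> count_list B x"
  obtains L Q1 Q R where "B = L @ [x] @ Q1 @ [x] @ Q @ [x] @ R"
proof -
  have "0 < count_list B x"
    using assms by simp
  then obtain L B' where B: "B = L @ x # B'" and "x \<notin> set L"
    and c: "count_list B' x = count_list B x - 1"
    by (rule split_first_occurrence)
  have "2 \<le> count_list B' x"
    using assms c by simp
  then obtain Q1 Q R where "B' = Q1 @ [x] @ Q @ [x] @ R"
    by (rule split_two_occurrences)
  then show ?thesis
    using that B by simp
qed

lemma split_exactly_two_occurrences:
  assumes "count_list B x = 2"
  obtains L Q R where "B = L @ [x] @ Q @ [x] @ R" and "x \<notin> set L" and "x \<notin> set Q" and "x \<notin> set R"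
proof -
  have "0 < count_list B x"
    using assms by simp
  then obtain L B' where B: "B = L @ x # B'" and "x \<notin> set L"
    and c: "count_list B' x = count_list B x - 1"
    by (rule split_first_occurrence)
  have "0 < count_list B' x"
    using assms c by simp
  then obtain Q R where B': "B' = Q @ x # R" and "x \<notin> set Q"
    and c': "count_list R x = count_list B' x - 1"
    by (rule split_first_occurrence)
  have "x \<notin> set R"
    using assms c c' by (simp add: count_list_0_iff)
  then show ?thesis
    using that B B' \<open>x \<notin> set L\<close> \<open>x \<notin> set Q\<close> by simp
qed

lemma restr_Nil [simp]: "restr [] X = []"
  by (simp add: restr_def)

lemma restr_Cons: "restr (a # w) X = (if a \<in> X then a # restr w X else restr w X)"
  by (simp add: restr_def)

lemma restr_append [simp]: "restr (u @ w) X = restr u X @ restr w X"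
  by (simp add: restr_def)

lemma restr_restr: "restr (restr w X) Y = restr w (X \<inter> Y)"
  by (simp add: restr_def conj_commute)

lemma restr_remove_absent [simp]: "x \<notin> set w \<Longrightarrow> restr w (- {x}) = w"
  by (induction w) (auto simp: restr_Cons)

lemma restr_remove_replicate [simp]: "restr (replicate k x) (- {x}) = []"
  by (induction k) (auto simp: restr_Cons)

lemma set_restr: "set (restr w X) = set w \<inter> X"
  by (auto simp: restr_def)

lemma restr_eq_subst: "restr w X = subst (\<lambda>a. if a \<in> X then [a] else []) w"
  by (induction w) (auto simp: restr_Cons)

lemma holds_restr: "holds M u v \<Longrightarrow> holds M (restr u X) (restr v X)"
  unfolding restr_eq_subst by (rule holds_subst)

lemma count_list_restr_other: "y \<noteq> x \<Longrightarrow> count_list (restr B (- {x})) y = count_list B y"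
  by (simp add: restr_def count_list_filter)

lemma distinct_restr_simp_letters: "distinct (restr w (simp_letters w))"
  by (simp add: distinct_iff_count_list_le_1 restr_def simp_letters_def count_list_filter)

lemma set_restr_simp_letters: "set (restr w (simp_letters w)) = simp_letters w"
  unfolding set_restr simp_letters_def using count_notin by fastforce

lemma restr_two_simple_letters:
  assumes "count_list w a = 1" and "count_list w b = 1" and "a \<noteq> b"
  shows "restr w {a, b} = [a, b] \<or> restr w {a, b} = [b, a]"
proof -
  let ?r = "restr w {a, b}"
  have "distinct ?r"
    using assms by (simp add: distinct_iff_count_list_le_1 restr_def count_list_filter)
  moreover have "set ?r = {a, b}"
    using assms count_notin[of a w] count_notin[of b w] by (auto simp: set_restr)
  ultimately have "length ?r = 2"
    using distinct_card[of ?r] assms(3) by simp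
  with \<open>set ?r = {a, b}\<close> show ?thesis
    by (auto simp: length_Suc_conv numeral_2_eq_2 doubleton_eq_iff)
qed

lemma distinct_eq_if_restr_pairs_eq:
  assumes "distinct xs" and "distinct ys" and "set xs = set ys"
    and "\<And>a b. a \<in> set xs \<Longrightarrow> b \<in> set xs \<Longrightarrow> a \<noteq> b \<Longrightarrow> restr xs {a, b} = restr ys {a, b}"
  shows "xs = ys"
  using assms
proof (induction xs arbitrary: ys)
  case Nil
  then show ?case
    by simp
next
  case (Cons a xs)
  obtain b ys' where ys: "ys = b # ys'"
    using Cons.prems(3) by (cases ys) auto
  have "b = a"
  proof (rule ccontr)
    assume "b \<noteq> a"
    then have "b \<in> set (a # xs)"
      using Cons.prems(3) ys by auto
    with Cons.prems(4)[of a b] \<open>b \<noteq> a\<close> show False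
      using ys by (simp add: restr_Cons)
  qed
  have "xs = ys'"
  proof (rule Cons.IH)
    show "distinct xs" "distinct ys'"
      using Cons.prems(1,2) ys by simp_all
    show "set xs = set ys'"
      using Cons.prems(1-3) ys \<open>b = a\<close> by (simp add: insert_ident)
    show "restr xs {c, d} = restr ys' {c, d}" if "c \<in> set xs" "d \<in> set xs" "c \<noteq> d" for c d
    proof -
      have "a \<noteq> c" "a \<noteq> d"
        using that Cons.prems(1) by auto
      then show ?thesis
        using Cons.prems(4)[of c d] that ys \<open>b = a\<close> by (simp add: restr_Cons)
    qed
  qed
  then show ?case
    using ys \<open>b = a\<close> by simp
qed

section \<open>Consequences of \<open>xy\<close> being an isoterm\<close>

lemma isotermD: "isoterm M w \<Longrightarrow> holds M w w' \<Longrightarrow> w' = w"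
  by (simp add: isoterm_def)

lemma subst_single_letter:
  "subst (\<lambda>a. if a = x then [c] else []) w = replicate (count_list w x) c"
  by (induction w) auto

lemma isoterm_xy_replicate:
  assumes iso: "isoterm M [0, 1]" and h: "holds M (replicate k 0) (replicate l 0)" and "k \<le> 1"
  shows "l = k"
proof -
  have "replicate (1 - k) 0 @ replicate k 0 @ [1] = [0::nat, 1]"
    using \<open>k \<le> 1\<close> by (cases k) auto
  moreover have "replicate (1 - k) 0 @ replicate l 0 @ [1] = replicate (1 - k + l) (0::nat) @ [1]"
    by (simp add: replicate_add)
  ultimately have "holds M [0, 1] (replicate (1 - k + l) 0 @ [1])"
    using holds_context[OF h, of "replicate (1 - k) 0" "[1]"] by (simp only:)
  then have "replicate (1 - k + l) 0 @ [1] = [0::nat, 1]"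
    by (rule isotermD[OF iso])
  then have "length (replicate (1 - k + l) (0::nat) @ [1]) = 2"
    by simp
  then show ?thesis
    using \<open>k \<le> 1\<close> by simp
qed

lemma isoterm_xy_count_list:
  assumes iso: "isoterm M [0, 1]" and h: "holds M u v"
    and "count_list u x \<le> 1 \<or> count_list v x \<le> 1"
  shows "count_list u x = count_list v x"
proof -
  let ?\<theta> = "\<lambda>a. if a = x then [0] else []"
  have "holds M (replicate (count_list u x) 0) (replicate (count_list v x) 0)"
    using holds_subst[OF h, of ?\<theta>] by (simp add: subst_single_letter)
  with assms(3) show ?thesis
    using isoterm_xy_replicate[OF iso] holds_sym by metis
qed

lemma isoterm_xy_simp_letters:
  assumes "isoterm M [0, 1]" and "holds M u v"
  shows "simp_letters u = simp_letters v"
proof -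
  have "count_list u x = 1 \<longleftrightarrow> count_list v x = 1" for x
    using isoterm_xy_count_list[OF assms, of x] by linarith
  then show ?thesis
    by (simp add: simp_letters_def)
qed

lemma isoterm_xy_mul_letters:
  assumes "isoterm M [0, 1]" and "holds M u v"
  shows "mul_letters u = mul_letters v"
proof -
  have "2 \<le> count_list u x \<longleftrightarrow> 2 \<le> count_list v x" for x
    using isoterm_xy_count_list[OF assms, of x] by linarith
  then show ?thesis
    by (simp add: mul_letters_def)
qed

lemma isoterm_xy_order:
  assumes iso: "isoterm M [0, 1]" and h: "holds M u v"
    and a: "count_list u a = 1" and b: "count_list u b = 1" and "a \<noteq> b"
  shows "restr u {a, b} = restr v {a, b}"
proof -
  have v: "count_list v a = 1" "count_list v b = 1"
    using isoterm_xy_count_list[OF iso h] a b by (metis le_refl)+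
  define \<theta> where "\<theta> = (\<lambda>c. if c = a then [0::nat] else [1])"
  have "holds M (subst \<theta> (restr u {a, b})) (subst \<theta> (restr v {a, b}))"
    using holds_subst[OF holds_restr[OF h]] .
  moreover have "subst \<theta> [a, b] = [0, 1]" "subst \<theta> [b, a] = [1, 0]"
    using \<open>a \<noteq> b\<close> by (simp_all add: \<theta>_def)
  moreover have "\<not> holds M [0, 1] [1, 0]"
    using isotermD[OF iso, of "[1, 0]"] by auto
  ultimately show ?thesis
    using restr_two_simple_letters[OF a b \<open>a \<noteq> b\<close>] restr_two_simple_letters[OF v \<open>a \<noteq> b\<close>]
      holds_sym by metis
qed

lemma isoterm_xy_restr_simp_letters:
  assumes iso: "isoterm M [0, 1]" and h: "holds M u v"
  shows "restr u (simp_letters u) = restr v (simp_letters v)"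
proof -
  let ?S = "simp_letters u"
  have S: "simp_letters v = ?S"
    using isoterm_xy_simp_letters[OF iso h] by simp
  show ?thesis
  proof (rule distinct_eq_if_restr_pairs_eq)
    show "distinct (restr u (simp_letters u))" "distinct (restr v (simp_letters v))"
      by (rule distinct_restr_simp_letters)+
    show "set (restr u (simp_letters u)) = set (restr v (simp_letters v))"
      using set_restr_simp_letters[of u] set_restr_simp_letters[of v] S by simp
    show "restr (restr u ?S) {a, b} = restr (restr v (simp_letters v)) {a, b}"
      if "a \<in> set (restr u ?S)" "b \<in> set (restr u ?S)" "a \<noteq> b" for a b
    proof -
      have "a \<in> ?S" "b \<in> ?S"
        using that by (simp_all add: set_restr_simp_letters)
      then have "?S \<inter> {a, b} = {a, b}"
        by auto
      moreover have "restr u {a, b} = restr v {a, b}"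
        using \<open>a \<in> ?S\<close> \<open>b \<in> ?S\<close> \<open>a \<noteq> b\<close>
        by (intro isoterm_xy_order[OF iso h]) (simp_all add: simp_letters_def)
      ultimately show ?thesis
        by (simp add: restr_restr S)
    qed
  qed
qed

section \<open>Derivations from \<open>\<Sigma>\<close>\<close>

lemma derives_xtyxsy:
  assumes "Sigma0 \<subseteq> E"
  shows "derives E (a @ X @ T @ Y @ X @ S @ Y @ b) (a @ X @ T @ X @ Y @ X @ S @ Y @ b)"
  by (rule derives_instance[of "[0, 2, 1, 0, 3, 1]" "[0, 2, 0, 1, 0, 3, 1]" E _ a
        "\<lambda>n. if n = 0 then X else if n = 1 then Y else if n = 2 then T else S" b])
    (use assms in \<open>simp_all add: Sigma0_def\<close>)

lemma derives_xtysyx: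
  assumes "Sigma0 \<subseteq> E"
  shows "derives E (a @ X @ T @ Y @ S @ Y @ X @ b) (a @ X @ T @ Y @ S @ X @ Y @ X @ b)"
  by (rule derives_instance[of "[0, 2, 1, 3, 1, 0]" "[0, 2, 1, 3, 0, 1, 0]" E _ a
        "\<lambda>n. if n = 0 then X else if n = 1 then Y else if n = 2 then T else S" b])
    (use assms in \<open>simp_all add: Sigma0_def\<close>)

lemma derives_double:
  assumes E: "Sigma0 \<subseteq> E" and "x \<in> set a"
  shows "derives E (a @ [x] @ c) (a @ [x, x] @ c)"
proof -
  obtain a1 a2 where "a = a1 @ x # a2"
    using split_list[OF \<open>x \<in> set a\<close>] by blast
  then show ?thesis
    using derives_xtyxsy[OF E, of a1 "[x]" a2 "[]" "[]" c] by simp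
qed

lemma derives_yx_xyx:
  assumes E: "Sigma0 \<subseteq> E" and x: "x \<in> set a" and y: "2 \<le> count_list (a @ [y, x] @ c) y"
  shows "derives E (a @ [y, x] @ c) (a @ [x, y, x] @ c)"
proof (cases "y = x")
  case True
  then show ?thesis
    using derives_double[OF E, of x "a @ [x]" c] by simp
next
  case False
  obtain a1 a2 where a: "a = a1 @ x # a2"
    using split_list[OF x] by blast
  have "count_list (a @ [y, x] @ c) y = count_list a y + 1 + count_list c y"
    using False by simp
  then have "0 < count_list a y + count_list c y"
    using y by linarith
  then have "y \<in> set a \<or> y \<in> set c"
    by (metis add_is_0 count_notin not_gr0)
  with a consider (later) "y \<in> set c" | (between) "y \<in> set a2" | (before) "y \<in> set a1"
    using False by auto
  then show ?thesis
  proof cases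
    case later
    then obtain c1 c2 where "c = c1 @ y # c2"
      using split_list by metis
    then show ?thesis
      using a derives_xtyxsy[OF E, of a1 "[x]" a2 "[y]" c1 c2] by simp
  next
    case between
    then obtain b1 b2 where "a2 = b1 @ y # b2"
      using split_list by metis
    then show ?thesis
      using a derives_xtysyx[OF E, of a1 "[x]" b1 "[y]" b2 c] by simp
  next
    case before
    then obtain b1 b2 where a1: "a1 = b1 @ y # b2"
      using split_list by metis
    have "derives E (a @ [y, x] @ c) (a @ [y, y, x] @ c)"
      using derives_double[OF E, of y a "[x] @ c"] before a by simp
    also have "derives E \<dots> (a @ [y, x, y, x] @ c)"
      using derives_xtysyx[OF E, of "b1 @ [y] @ b2" "[x]" a2 "[y]" "[]" c] a a1 by simp
    also have "derives E \<dots> (a @ [x, y, x] @ c)"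
      using derives.sym[OF derives_xtysyx[OF E, of b1 "[y]" b2 "[x]" a2 "[x] @ c"]] a a1 by simp
    finally show ?thesis .
  qed
qed

lemma derives_copy_left:
  assumes E: "Sigma0 \<subseteq> E"
  shows "x \<in> set a \<Longrightarrow> \<forall>y \<in> set w. 2 \<le> count_list (a @ w @ [x] @ c) y \<Longrightarrow>
    derives E (a @ w @ [x] @ c) (a @ [x] @ w @ [x] @ c)"
proof (induction w arbitrary: a)
  case Nil
  then show ?case
    using derives_double[OF E] by simp
next
  case (Cons y w)
  have "derives E (a @ (y # w) @ [x] @ c) ((a @ [y]) @ [x] @ w @ [x] @ c)"
    using Cons.IH[of "a @ [y]"] Cons.prems by simp
  also have "derives E \<dots> (a @ [x, y, x] @ w @ [x] @ c)"
  proof -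
    have "count_list (a @ (y # w) @ [x] @ c) y \<le> count_list (a @ [y, x] @ w @ [x] @ c) y"
      by simp
    then show ?thesis
      using derives_yx_xyx[OF E Cons.prems(1), of y "w @ [x] @ c"] Cons.prems(2) by simp
  qed
  also have "derives E \<dots> (a @ [x] @ (y # w) @ [x] @ c)"
    using derives.sym[OF Cons.IH[of "a @ [x, y]"]] Cons.prems by simp
  finally show ?case .
qed

section \<open>Words as blocks interleaved with simple letters\<close>

fun interleave :: "word list \<Rightarrow> word list \<Rightarrow> word" where
  "interleave (b # bs) (c # cs) = b @ c @ interleave bs cs"
| "interleave (b # bs) [] = b"
| "interleave [] cs = []"

definition left_of :: "nat \<Rightarrow> word list \<Rightarrow> word list \<Rightarrow> word" where
  "left_of j bs cs = interleave (take j bs @ [[]]) (take j cs)"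

definition right_of :: "nat \<Rightarrow> word list \<Rightarrow> word list \<Rightarrow> word" where
  "right_of j bs cs = interleave ([] # drop (Suc j) bs) (drop j cs)"

lemma interleave_Cons_first: "interleave (b # bs) cs = b @ interleave ([] # bs) cs"
  by (cases cs) auto

lemma interleave_split_at:
  "j < length bs \<Longrightarrow> length bs = Suc (length cs) \<Longrightarrow>
   interleave bs cs = left_of j bs cs @ bs ! j @ right_of j bs cs"
proof (induction j arbitrary: bs cs)
  case 0
  then obtain b bs' where "bs = b # bs'"
    by (cases bs) auto
  then show ?case
    using interleave_Cons_first[of b bs' cs] by (simp add: left_of_def right_of_def)
next
  case (Suc j)
  then obtain b bs' c cs' where bs: "bs = b # bs'" and cs: "cs = c # cs'"
    by (cases bs; cases cs) auto
  have "interleave bs' cs' = left_of j bs' cs' @ bs' ! j @ right_of j bs' cs'"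
    using Suc bs cs by simp
  moreover have "left_of (Suc j) bs cs = b @ c @ left_of j bs' cs'"
    by (simp add: left_of_def bs cs)
  moreover have "right_of (Suc j) bs cs = right_of j bs' cs'"
    by (simp add: right_of_def bs cs)
  ultimately show ?case
    by (simp add: bs cs)
qed

lemma left_of_update [simp]: "left_of j (bs[j := B]) cs = left_of j bs cs"
  by (simp add: left_of_def)

lemma right_of_update [simp]: "right_of j (bs[j := B]) cs = right_of j bs cs"
  by (simp add: right_of_def)

lemma interleave_update:
  "j < length bs \<Longrightarrow> length bs = Suc (length cs) \<Longrightarrow>
   interleave (bs[j := B]) cs = left_of j bs cs @ B @ right_of j bs cs"
  using interleave_split_at[of j "bs[j := B]" cs] by simp

lemma interleave_update_0:
  "0 < length bs \<Longrightarrow> length bs = Suc (length cs) \<Longrightarrow>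
   interleave (bs[0 := W @ bs ! 0]) cs = W @ interleave bs cs"
  using interleave_update[of 0 bs cs "W @ bs ! 0"] interleave_split_at[of 0 bs cs]
  by (simp add: left_of_def)

lemma interleave_split_block:
  assumes "i < length bs" and "length bs = Suc (length cs)"
  shows "interleave (take i bs @ [B1, B2] @ drop (Suc i) bs) (take i cs @ [Q] @ drop i cs)
       = left_of i bs cs @ B1 @ Q @ B2 @ right_of i bs cs"
proof -
  let ?bs = "take i bs @ [B1, B2] @ drop (Suc i) bs" and ?cs = "take i cs @ [Q] @ drop i cs"
  have "i < length ?bs" "length ?bs = Suc (length ?cs)"
    using assms by auto
  moreover have "left_of i ?bs ?cs = left_of i bs cs"
    using assms by (simp add: left_of_def)
  moreover have "right_of i ?bs ?cs = Q @ B2 @ right_of i bs cs"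
    using assms interleave_Cons_first[of B2 "drop (Suc i) bs" "drop i cs"]
    by (simp add: right_of_def Cons_nth_drop_Suc)
  ultimately show ?thesis
    using interleave_split_at[of i ?bs ?cs] assms by (simp add: nth_append)
qed

lemma interleave_append_separator:
  "j < length cs \<Longrightarrow> length bs = Suc (length cs) \<Longrightarrow>
   interleave bs (cs[j := cs ! j @ W]) = interleave (bs[Suc j := W @ bs ! Suc j]) cs"
proof (induction j arbitrary: bs cs)
  case 0
  then obtain b0 b1 bs' c0 cs' where "bs = b0 # b1 # bs'" "cs = c0 # cs'"
    by (cases bs; cases cs) (auto simp: length_Suc_conv)
  then show ?case
    using interleave_Cons_first[of "W @ b1" bs' cs'] interleave_Cons_first[of b1 bs' cs'] by simp
next
  case (Suc j)
  then obtain b0 bs' c0 cs' where "bs = b0 # bs'" "cs = c0 # cs'"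
    by (cases bs; cases cs) auto
  then show ?case
    using Suc by simp
qed

lemma set_left_of:
  assumes "k < j" and "j < length bs" and "length bs = Suc (length cs)"
  shows "set (bs ! k) \<subseteq> set (left_of j bs cs)"
proof -
  let ?bs = "take j bs @ [[]]" and ?cs = "take j cs"
  have "interleave ?bs ?cs = left_of k ?bs ?cs @ ?bs ! k @ right_of k ?bs ?cs"
    by (rule interleave_split_at) (use assms in auto)
  moreover have "?bs ! k = bs ! k"
    using assms by (simp add: nth_append)
  ultimately show ?thesis
    unfolding left_of_def[of j] by auto
qed

lemma count_list_interleave:
  "length bs = Suc (length cs) \<Longrightarrow>
   count_list (interleave bs cs) y = (\<Sum>b \<leftarrow> bs. count_list b y) + (\<Sum>c \<leftarrow> cs. count_list c y)"
proof (induction cs arbitrary: bs)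
  case Nil
  then show ?case
    by (cases bs) auto
next
  case (Cons c cs)
  then show ?case
    by (cases bs) auto
qed

lemma restr_interleave:
  "restr (interleave bs cs) X = interleave (map (\<lambda>b. restr b X) bs) (map (\<lambda>c. restr c X) cs)"
  by (induction bs cs rule: interleave.induct) auto

lemma subst_interleave:
  "subst \<theta> (interleave bs cs) = interleave (map (subst \<theta>) bs) (map (subst \<theta>) cs)"
  by (induction bs cs rule: interleave.induct) auto

definition assemble :: "word list \<Rightarrow> nat list \<Rightarrow> word" where
  "assemble bs ts = interleave bs (map (\<lambda>t. [t]) ts)"

definition block_counts :: "word list \<Rightarrow> nat \<Rightarrow> nat list" where
  "block_counts bs x = map (\<lambda>B. count_list B x) bs"

(* The word assemble bs ts = u_0 t_1 u_1 ... t_m u_m has the t_i as simple letters and the u_i as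
   blocks. *)
definition block_form :: "word list \<Rightarrow> nat list \<Rightarrow> bool" where
  "block_form bs ts \<longleftrightarrow> length bs = Suc (length ts) \<and> distinct ts \<and>
     (\<forall>B \<in> set bs. set B \<inter> set ts = {}) \<and> (\<forall>y. sum_list (block_counts bs y) \<noteq> 1)"

lemma block_counts_update: "block_counts (bs[i := B]) x = (block_counts bs x)[i := count_list B x]"
  by (simp add: block_counts_def map_update)

lemma count_list_assemble:
  "length bs = Suc (length ts) \<Longrightarrow>
   count_list (assemble bs ts) y = sum_list (block_counts bs y) + count_list ts y"
proof -
  have "(\<Sum>c \<leftarrow> map (\<lambda>t. [t]) ts. count_list c y) = count_list ts y"
    by (induction ts) auto
  then show "length bs = Suc (length ts) \<Longrightarrow> ?thesis"
    using count_list_interleave[of bs "map (\<lambda>t. [t]) ts" y]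
    by (simp add: assemble_def block_counts_def comp_def)
qed

lemma sum_block_counts_eq_0: "(\<forall>B \<in> set bs. y \<notin> set B) \<Longrightarrow> sum_list (block_counts bs y) = 0"
  by (induction bs) (auto simp: block_counts_def)

lemma block_form_sum_block_counts_simple:
  "block_form bs ts \<Longrightarrow> y \<in> set ts \<Longrightarrow> sum_list (block_counts bs y) = 0"
  by (rule sum_block_counts_eq_0) (auto simp: block_form_def)

lemma count_list_assemble_block_form:
  assumes "block_form bs ts"
  shows "count_list (assemble bs ts) y = (if y \<in> set ts then 1 else sum_list (block_counts bs y))"
proof (cases "y \<in> set ts")
  case True
  have "count_list ts y = 1"
    using True assms by (simp add: block_form_def count_list_distinct)
  then show ?thesis
    using True assms block_form_sum_block_counts_simple[OF assms True]
    by (simp add: count_list_assemble block_form_def)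
next
  case False
  then show ?thesis
    using assms by (simp add: count_list_assemble block_form_def)
qed

lemma block_form_simp_letters: "block_form bs ts \<Longrightarrow> simp_letters (assemble bs ts) = set ts"
  by (auto simp: simp_letters_def count_list_assemble_block_form block_form_def)

lemma block_form_mul_letters:
  "block_form bs ts \<Longrightarrow> mul_letters (assemble bs ts) = {y. 2 \<le> sum_list (block_counts bs y)}"
  by (auto simp: mul_letters_def count_list_assemble_block_form block_form_sum_block_counts_simple)

lemma two_le_count_list_assemble:
  assumes "block_form bs ts" and "B \<in> set bs" and "y \<in> set B"
  shows "2 \<le> count_list (assemble bs ts) y"
proof -
  have "y \<notin> set ts"
    using assms by (auto simp: block_form_def)
  moreover have "count_list B y \<le> sum_list (block_counts bs y)"
    using assms(2) by (simp add: block_counts_def member_le_sum_list)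
  then have "0 < sum_list (block_counts bs y)"
    using assms(3) count_list_pos_iff[of B y] by linarith
  moreover have "sum_list (block_counts bs y) \<noteq> 1"
    using assms(1) by (simp add: block_form_def)
  ultimately show ?thesis
    using count_list_assemble_block_form[OF assms(1), of y] by simp
qed

lemma block_form_restr_simp_letters:
  assumes "block_form bs ts"
  shows "restr (assemble bs ts) (simp_letters (assemble bs ts)) = ts"
proof -
  have "map (\<lambda>b. restr b (set ts)) bs = map (\<lambda>b. []) bs"
    using assms by (auto simp: block_form_def restr_def filter_empty_conv)
  then have "map (\<lambda>b. restr b (set ts)) bs = replicate (Suc (length ts)) []"
    using assms by (simp add: map_replicate_const block_form_def)
  moreover have "map (\<lambda>c. restr c (set ts)) (map (\<lambda>t. [t]) ts) = map (\<lambda>t. [t]) ts"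
    by (induction ts) (auto simp: restr_def)
  moreover have "interleave (replicate (Suc (length ts)) []) (map (\<lambda>t. [t]) ts) = ts"
    by (induction ts) auto
  ultimately show ?thesis
    using restr_interleave[of bs "map (\<lambda>t. [t]) ts" "set ts"]
    by (simp only: assemble_def block_form_simp_letters[OF assms, unfolded assemble_def])
qed

lemma split_at_letters_not_Nil: "split_at_letters S w \<noteq> []"
  by (induction w) (auto split: list.splits)

lemma split_at_letters_append_block:
  "set B \<inter> S = {} \<Longrightarrow>
   split_at_letters S (B @ w) = (B @ hd (split_at_letters S w)) # tl (split_at_letters S w)"
proof (induction B)
  case Nil
  then show ?case
    using split_at_letters_not_Nil[of S w] by (cases "split_at_letters S w") auto
qed simp

lemma split_at_letters_assemble:
  "length bs = Suc (length ts) \<Longrightarrow> set ts \<subseteq> S \<Longrightarrow> \<forall>B \<in> set bs. set B \<inter> S = {} \<Longrightarrow>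
   split_at_letters S (assemble bs ts) = bs"
proof (induction ts arbitrary: bs)
  case Nil
  then obtain B where "bs = [B]"
    by (cases bs) auto
  then show ?case
    using split_at_letters_append_block[of B S "[]"] Nil by (simp add: assemble_def)
next
  case (Cons t ts)
  then obtain B bs' where bs: "bs = B # bs'"
    by (cases bs) auto
  have "split_at_letters S (t # assemble bs' ts) = [] # bs'"
    using Cons bs by simp
  moreover have "assemble bs (t # ts) = B @ t # assemble bs' ts"
    by (simp add: assemble_def bs)
  ultimately show ?case
    using split_at_letters_append_block[of B S "t # assemble bs' ts"] Cons.prems(3) bs by simp
qed

lemma block_form_blocks: "block_form bs ts \<Longrightarrow> blocks (assemble bs ts) = bs"
  unfolding blocks_def
  by (subst block_form_simp_letters) (auto simp: block_form_def intro!: split_at_letters_assemble)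

lemma assemble_split_at_letters:
  "assemble (split_at_letters S w) (filter (\<lambda>a. a \<in> S) w) = w \<and>
   length (split_at_letters S w) = Suc (length (filter (\<lambda>a. a \<in> S) w)) \<and>
   (\<forall>B \<in> set (split_at_letters S w). set B \<inter> S = {})"
proof (induction w)
  case Nil
  then show ?case
    by (simp add: assemble_def)
next
  case (Cons a w)
  show ?case
  proof (cases "a \<in> S")
    case True
    then show ?thesis
      using Cons by (simp add: assemble_def)
  next
    case False
    obtain b bs where sp: "split_at_letters S w = b # bs"
      using split_at_letters_not_Nil[of S w] by (cases "split_at_letters S w") auto
    have "interleave ((a # b) # bs) (map (\<lambda>t. [t]) (filter (\<lambda>a. a \<in> S) w))
        = a # interleave (b # bs) (map (\<lambda>t. [t]) (filter (\<lambda>a. a \<in> S) w))"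
      by (cases "filter (\<lambda>a. a \<in> S) w") auto
    then show ?thesis
      using Cons False sp by (auto simp: assemble_def)
  qed
qed

lemma assemble_blocks: "assemble (blocks w) (restr w (simp_letters w)) = w"
  using assemble_split_at_letters[of "simp_letters w" w] by (simp add: blocks_def restr_def)

lemma block_form_blocks_restr: "block_form (blocks w) (restr w (simp_letters w))"
proof -
  let ?S = "simp_letters w" and ?ts = "restr w (simp_letters w)"
  have len: "length (blocks w) = Suc (length ?ts)" and disj: "\<forall>B \<in> set (blocks w). set B \<inter> ?S = {}"
    using assemble_split_at_letters[of ?S w] by (simp_all add: blocks_def restr_def)
  have "sum_list (block_counts (blocks w) y) \<noteq> 1" for y
  proof (cases "y \<in> ?S")
    case True
    then show ?thesis
      using disj by (subst sum_block_counts_eq_0) auto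
  next
    case False
    then have "count_list ?ts y = 0"
      by (simp add: set_restr_simp_letters count_list_0_iff)
    then show ?thesis
      using False count_list_assemble[OF len, of y] assemble_blocks[of w]
      by (simp add: simp_letters_def)
  qed
  then show ?thesis
    using len disj distinct_restr_simp_letters[of w] set_restr_simp_letters[of w]
    by (simp add: block_form_def)
qed

section \<open>Compact words\<close>

(* Unspecified for lists without positive entries, which is harmless for compact_counts. *)
definition first_pos :: "nat list \<Rightarrow> nat" where
  "first_pos ks = (LEAST i. i < length ks \<and> 0 < ks ! i)"

definition compact_counts :: "nat list \<Rightarrow> bool" where
  "compact_counts ks \<longleftrightarrow> (\<forall>j < length ks. ks ! j \<le> (if j = first_pos ks then 2 else 1))"

definition compact_blocks :: "word list \<Rightarrow> bool" where
  "compact_blocks bs \<longleftrightarrow> (\<forall>y. compact_counts (block_counts bs y))"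

lemma first_pos_spec:
  assumes "j < length ks" and "0 < ks ! j"
  shows "first_pos ks < length ks" and "0 < ks ! first_pos ks" and "first_pos ks \<le> j"
proof -
  have "first_pos ks < length ks \<and> 0 < ks ! first_pos ks"
    unfolding first_pos_def by (rule LeastI[of _ j]) (use assms in simp)
  then show "first_pos ks < length ks" "0 < ks ! first_pos ks"
    by auto
  show "first_pos ks \<le> j"
    unfolding first_pos_def by (rule Least_le) (use assms in simp)
qed

lemma x_compact_iff_compact_counts: "x_compact w x \<longleftrightarrow> compact_counts (block_counts (blocks w) x)"
proof -
  have "(i < length (blocks w) \<and> x \<in> set (blocks w ! i)) \<longleftrightarrow>
      (i < length (block_counts (blocks w) x) \<and> 0 < block_counts (blocks w) x ! i)" for i
    by (auto simp: block_counts_def count_list_pos_iff)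
  then show ?thesis
    unfolding x_compact_def compact_counts_def first_pos_def Let_def by (simp add: block_counts_def)
qed

lemma compact_counts_if_sum_le_1: "sum_list ks \<le> 1 \<Longrightarrow> compact_counts ks"
  unfolding compact_counts_def using elem_le_sum_list[of _ ks] by fastforce

lemma compact_assemble_iff:
  assumes "block_form bs ts"
  shows "compact (assemble bs ts) \<longleftrightarrow> compact_blocks bs"
proof -
  have "compact (assemble bs ts) \<longleftrightarrow>
      (\<forall>y. 2 \<le> sum_list (block_counts bs y) \<longrightarrow> compact_counts (block_counts bs y))"
    by (simp add: compact_def block_form_mul_letters[OF assms] x_compact_iff_compact_counts
        block_form_blocks[OF assms])
  also have "\<dots> \<longleftrightarrow> compact_blocks bs"
  proof -
    have "compact_counts (block_counts bs y)" if "\<not> 2 \<le> sum_list (block_counts bs y)" for y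
      using that by (intro compact_counts_if_sum_le_1) simp
    then show ?thesis
      unfolding compact_blocks_def by blast
  qed
  finally show ?thesis .
qed

lemma not_compact_split:
  assumes "\<not> compact w"
  shows "\<exists>x a Q c. w = a @ [x] @ Q @ [x] @ c \<and> x \<in> set a \<and> set Q \<inter> simp_letters w = {}"
proof -
  define bs where "bs = blocks w"
  define C where "C = map (\<lambda>t. [t]) (restr w (simp_letters w))"
  have bf: "block_form bs (restr w (simp_letters w))"
    unfolding bs_def by (rule block_form_blocks_restr)
  have len: "length bs = Suc (length C)"
    using bf by (simp add: block_form_def C_def)
  obtain x where "\<not> compact_counts (block_counts bs x)"
    using assms by (auto simp: compact_def x_compact_iff_compact_counts bs_def)
  then obtain j where j: "j < length bs"
    and cj: "\<not> count_list (bs ! j) x \<le> (if j = first_pos (block_counts bs x) then 2 else 1)"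
    by (auto simp: compact_counts_def block_counts_def)
  let ?i = "first_pos (block_counts bs x)"
  have fp: "?i < length bs" "0 < count_list (bs ! ?i) x" "?i \<le> j"
    using first_pos_spec[of j "block_counts bs x"] j cj by (auto simp: block_counts_def split: if_splits)
  have Bj: "set (bs ! j) \<inter> simp_letters w = {}"
    using bf j set_restr_simp_letters[of w] by (auto simp: block_form_def)
  have "w = interleave bs C"
    using assemble_blocks[of w] by (simp add: assemble_def bs_def C_def)
  then have w: "w = left_of j bs C @ bs ! j @ right_of j bs C"
    using interleave_split_at[OF j len] by simp
  show ?thesis
  proof (cases "j = ?i")
    case False
    have "2 \<le> count_list (bs ! j) x"
      using cj False by simp
    then obtain L Q R where B: "bs ! j = L @ [x] @ Q @ [x] @ R"
      by (rule split_two_occurrences)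
    have "x \<in> set (left_of j bs C)"
      using set_left_of[of ?i j bs C] fp False len j count_list_pos_iff[of "bs ! ?i" x] by auto
    moreover have "w = (left_of j bs C @ L) @ [x] @ Q @ [x] @ (R @ right_of j bs C)"
      using w B by simp
    moreover have "set Q \<inter> simp_letters w = {}"
      using B Bj by auto
    ultimately show ?thesis
      by (intro exI[of _ x] exI[of _ "left_of j bs C @ L"] exI[of _ Q] exI[of _ "R @ right_of j bs C"])
        simp
  next
    case True
    have "3 \<le> count_list (bs ! j) x"
      using cj True by simp
    then obtain L Q1 Q R where B: "bs ! j = L @ [x] @ Q1 @ [x] @ Q @ [x] @ R"
      by (rule split_three_occurrences)
    have "w = (left_of j bs C @ L @ [x] @ Q1) @ [x] @ Q @ [x] @ (R @ right_of j bs C)"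
      using w B by simp
    moreover have "set Q \<inter> simp_letters w = {}"
      using B Bj by auto
    ultimately show ?thesis
      by (intro exI[of _ x] exI[of _ "left_of j bs C @ L @ [x] @ Q1"] exI[of _ Q]
          exI[of _ "R @ right_of j bs C"]) simp
  qed
qed

lemma derives_compact:
  assumes E: "Sigma0 \<subseteq> E"
  shows "\<exists>w'. derives E w w' \<and> compact w'"
proof (induction "length w" arbitrary: w rule: less_induct)
  case less
  show ?case
  proof (cases "compact w")
    case True
    then show ?thesis
      using derives.refl by blast
  next
    case False
    then obtain x a Q c where w: "w = a @ [x] @ Q @ [x] @ c" and "x \<in> set a"
      and Q: "set Q \<inter> simp_letters w = {}"
      using not_compact_split by blast
    have "2 \<le> count_list (a @ Q @ [x] @ c) y" if "y \<in> set Q" for y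
    proof (cases "y = x")
      case True
      then show ?thesis
        using \<open>x \<in> set a\<close> that count_list_0_iff[of a x] count_list_0_iff[of Q x] by simp
    next
      case False
      have "y \<notin> simp_letters w" "y \<in> set w"
        using Q that w by auto
      then have "2 \<le> count_list w y"
        by (simp add: two_le_count_list_iff simp_letters_def)
      then show ?thesis
        using w False by simp
    qed
    then have "derives E w (a @ Q @ [x] @ c)"
      using derives.sym[OF derives_copy_left[OF E \<open>x \<in> set a\<close>]] w by simp
    moreover obtain w' where "derives E (a @ Q @ [x] @ c) w'" "compact w'"
      using less[of "a @ Q @ [x] @ c"] w by auto
    ultimately show ?thesis
      using derives.trans by blast
  qed
qed

section \<open>Lifting almost-linear identities\<close>

(* x^k_0 t_1 x^k_1 ... t_m x^k_m, the shape of u(x, simp u) *)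
definition pattern :: "nat \<Rightarrow> nat list \<Rightarrow> nat list \<Rightarrow> word" where
  "pattern x ks ts = assemble (map (\<lambda>k. replicate k x) ks) ts"

lemma restr_assemble_pattern:
  assumes bf: "block_form bs ts" and "x \<notin> set ts"
  shows "restr (assemble bs ts) (insert x (set ts)) = pattern x (block_counts bs x) ts"
proof -
  have "restr B (insert x (set ts)) = replicate (count_list B x) x" if "B \<in> set bs" for B
  proof -
    have "restr B (insert x (set ts)) = filter (\<lambda>c. c = x) B"
      using that bf by (auto simp: restr_def block_form_def intro!: filter_cong)
    also have "\<dots> = replicate (count_list B x) x"
      by (induction B) auto
    finally show ?thesis .
  qed
  then have "map (\<lambda>b. restr b (insert x (set ts))) bs = map (\<lambda>k. replicate k x) (block_counts bs x)"
    by (simp add: block_counts_def)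
  moreover have "map (\<lambda>c. restr c (insert x (set ts))) (map (\<lambda>t. [t]) ts) = map (\<lambda>t. [t]) ts"
    by (induction ts) (auto simp: restr_def)
  ultimately show ?thesis
    unfolding assemble_def pattern_def restr_interleave by (simp only:)
qed

lemma holds_pattern:
  assumes "holds M (assemble bs ts) (assemble bs' ts)"
    and "block_form bs ts" and "block_form bs' ts" and "x \<notin> set ts"
  shows "holds M (pattern x (block_counts bs x) ts) (pattern x (block_counts bs' x) ts)"
  using holds_restr[OF assms(1), of "insert x (set ts)"]
  by (simp only: restr_assemble_pattern[OF assms(2,4)] restr_assemble_pattern[OF assms(3,4)])

lemma count_list_pattern:
  "length ks = Suc (length ts) \<Longrightarrow> y \<noteq> x \<Longrightarrow> count_list (pattern x ks ts) y = count_list ts y"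
  by (simp add: pattern_def count_list_assemble block_counts_def sum_list_eq_0_iff)

lemma pattern_almost_linear:
  assumes "length ks = Suc (length ts)" and "distinct ts"
  shows "almost_linear (pattern x ks ts)"
proof -
  have "y = x" if "y \<in> mul_letters (pattern x ks ts)" for y
  proof (rule ccontr)
    assume "y \<noteq> x"
    then have "count_list (pattern x ks ts) y \<le> 1"
      using assms count_list_pattern distinct_iff_count_list_le_1[of ts] by simp
    then show False
      using that by (simp add: mul_letters_def)
  qed
  then have "mul_letters (pattern x ks ts) \<subseteq> {x}"
    by blast
  then have "card (mul_letters (pattern x ks ts)) \<le> card {x}"
    by (intro card_mono) auto
  then show ?thesis
    by (simp add: almost_linear_def)
qed

definition framed :: "nat \<Rightarrow> (word \<times> word) list \<Rightarrow> nat list \<Rightarrow> word list" where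
  "framed x LRs ks = map (\<lambda>((L, R), k). L @ replicate k x @ R) (zip LRs ks)"

lemma length_framed [simp]: "length (framed x LRs ks) = min (length LRs) (length ks)"
  by (simp add: framed_def)

lemma nth_framed:
  "j < length LRs \<Longrightarrow> j < length ks \<Longrightarrow>
   framed x LRs ks ! j = fst (LRs ! j) @ replicate (ks ! j) x @ snd (LRs ! j)"
  by (simp add: framed_def split_def)

lemma framed_split_block:
  assumes "i < length LRs" and "length LRs = length ks"
  shows "framed x (take i LRs @ [p1, p2] @ drop (Suc i) LRs) (take i ks @ [a, b] @ drop (Suc i) ks)
       = take i (framed x LRs ks) @ [fst p1 @ replicate a x @ snd p1, fst p2 @ replicate b x @ snd p2] @
         drop (Suc i) (framed x LRs ks)"
  using assms unfolding framed_def
  by (simp add: zip_append take_zip drop_zip take_map drop_map split_def)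

lemma subst_pattern:
  assumes "\<theta> x = [x]"
  shows "length LRs = Suc (length ts) \<Longrightarrow> length ks = Suc (length ts) \<Longrightarrow> length Cs = length ts \<Longrightarrow>
    \<forall>i < length ts. \<theta> (ts ! i) = snd (LRs ! i) @ Cs ! i @ fst (LRs ! Suc i) \<Longrightarrow>
    fst (hd LRs) @ subst \<theta> (pattern x ks ts) @ snd (last LRs) = interleave (framed x LRs ks) Cs"
proof (induction ts arbitrary: LRs ks Cs)
  case Nil
  then obtain L R k where "LRs = [(L, R)]" "ks = [k]" "Cs = []"
    by (cases LRs; cases ks; cases Cs) auto
  then show ?case
    using subst_replicate_fixed[of \<theta> x, OF assms] by (simp add: pattern_def assemble_def framed_def)
next
  case (Cons t ts)
  obtain L R LRs' k ks' C Cs' where LRs: "LRs = (L, R) # LRs'" and ks: "ks = k # ks'"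
    and Cs: "Cs = C # Cs'"
    using Cons.prems(1-3) by (cases LRs; cases ks; cases Cs) auto
  have len: "length LRs' = Suc (length ts)" "length ks' = Suc (length ts)" "length Cs' = length ts"
    using Cons.prems LRs ks Cs by auto
  have "\<forall>i < length ts. \<theta> (ts ! i) = snd (LRs' ! i) @ Cs' ! i @ fst (LRs' ! Suc i)"
    using Cons.prems(4) LRs Cs by auto
  then have IH: "fst (hd LRs') @ subst \<theta> (pattern x ks' ts) @ snd (last LRs') = interleave (framed x LRs' ks') Cs'"
    using Cons.IH len by blast
  have "\<theta> t = R @ C @ fst (hd LRs')"
    using Cons.prems(4)[rule_format, of 0] LRs Cs len(1) by (cases LRs') auto
  moreover have "pattern x ks (t # ts) = replicate k x @ [t] @ pattern x ks' ts"
    by (simp add: pattern_def assemble_def ks)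
  moreover have "framed x LRs ks = (L @ replicate k x @ R) # framed x LRs' ks'"
    by (simp add: framed_def LRs ks)
  moreover have "LRs' \<noteq> []"
    using len(1) by auto
  ultimately show ?case
    using IH LRs Cs subst_replicate_fixed[of \<theta> x, OF assms] by simp
qed

lemma derives_Gamma_framed:
  assumes "x \<notin> set ts" and "distinct ts"
    and len: "length LRs = Suc (length ts)" "length ks = Suc (length ts)" "length ks' = Suc (length ts)"
      "length Cs = length ts"
    and h: "holds M (pattern x ks ts) (pattern x ks' ts)"
  shows "derives (Gamma M) (interleave (framed x LRs ks) Cs) (interleave (framed x LRs ks') Cs)"
proof -
  \<comment> \<open>each \<open>t\<^sub>i\<close> becomes the material between the \<open>x\<close>-runs of the two frames next to it\<close>
  define \<theta> where "\<theta> a = (if a = x then [x]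
      else case map_of (zip ts [0..<length ts]) a of
        Some i \<Rightarrow> snd (LRs ! i) @ Cs ! i @ fst (LRs ! Suc i) | None \<Rightarrow> [])" for a
  have \<theta>_x: "\<theta> x = [x]"
    by (simp add: \<theta>_def)
  moreover have \<theta>_ts: "\<forall>i < length ts. \<theta> (ts ! i) = snd (LRs ! i) @ Cs ! i @ fst (LRs ! Suc i)"
  proof (intro allI impI)
    fix i
    assume "i < length ts"
    then have "ts ! i \<noteq> x" and "map_of (zip ts [0..<length ts]) (ts ! i) = Some i"
      using assms(1) map_of_zip_nth[OF _ assms(2), of "[0..<length ts]" i] by auto
    then show "\<theta> (ts ! i) = snd (LRs ! i) @ Cs ! i @ fst (LRs ! Suc i)"
      by (simp add: \<theta>_def)
  qed
  have "(pattern x ks ts, pattern x ks' ts) \<in> Gamma M"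
    using h pattern_almost_linear len assms(2) by (simp add: Gamma_def)
  moreover have "fst (hd LRs) @ subst \<theta> (pattern x ks ts) @ snd (last LRs) = interleave (framed x LRs ks) Cs"
    by (rule subst_pattern[OF \<theta>_x len(1,2,4) \<theta>_ts])
  moreover have "fst (hd LRs) @ subst \<theta> (pattern x ks' ts) @ snd (last LRs) = interleave (framed x LRs ks') Cs"
    by (rule subst_pattern[OF \<theta>_x len(1,3,4) \<theta>_ts])
  ultimately show ?thesis
    by (metis derives_instance)
qed

lemma subst_assemble_append_separator:
  assumes "distinct ts" and "j < length ts" and "length B = Suc (length ts)"
    and "\<forall>b \<in> set B. ts ! j \<notin> set b"
  shows "subst (\<lambda>a. if a = ts ! j then a # W else [a]) (assemble B ts)
       = assemble (B[Suc j := W @ B ! Suc j]) ts"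
proof -
  let ?\<rho> = "\<lambda>a. if a = ts ! j then a # W else [a]" and ?C = "map (\<lambda>t. [t]) ts"
  have "map (subst ?\<rho>) B = B"
    using assms(4) by (auto intro!: map_idI subst_id_on)
  moreover have "map (subst ?\<rho>) ?C = ?C[j := ?C ! j @ W]"
    using assms(1,2) by (auto intro!: nth_equalityI simp: nth_list_update nth_eq_iff_index_eq)
  ultimately show ?thesis
    using interleave_append_separator[of j ?C B W] assms(2,3)
    by (simp add: assemble_def subst_interleave)
qed

lemma holds_prepend_block:
  assumes h: "holds M (assemble bs ts) (assemble bs' ts)"
    and "distinct ts" and i: "i < length bs"
    and len: "length bs = Suc (length ts)" "length bs' = Suc (length ts)"
    and disj: "\<forall>b \<in> set bs \<union> set bs'. set b \<inter> set ts = {}"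
  shows "holds M (assemble (bs[i := W @ bs ! i]) ts) (assemble (bs'[i := W @ bs' ! i]) ts)"
proof (cases i)
  case 0
  then show ?thesis
    using holds_context[OF h, of W "[]"] interleave_update_0[of bs _ W] interleave_update_0[of bs' _ W] len
    by (simp add: assemble_def)
next
  case (Suc j)
  have "j < length ts"
    using i len Suc by simp
  then have "ts ! j \<notin> set b" if "b \<in> set bs \<union> set bs'" for b
    using disj that nth_mem[OF \<open>j < length ts\<close>] by blast
  then show ?thesis
    using holds_subst[OF h, of "\<lambda>a. if a = ts ! j then a # W else [a]"] Suc \<open>j < length ts\<close> len
      subst_assemble_append_separator[OF \<open>distinct ts\<close> \<open>j < length ts\<close>] by simp
qed

lemma pattern_split_block:
  assumes "i < length ks" and "length ks = Suc (length ts)"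
  shows "pattern x (take i ks @ [a, b] @ drop (Suc i) ks) (take i ts @ [z] @ drop i ts)
       = assemble ((map (\<lambda>k. replicate k x) ks)[i := replicate a x @ [z] @ replicate b x]) ts"
proof -
  let ?E = "map (\<lambda>k. replicate k x) ks" and ?C = "map (\<lambda>t. [t]) ts"
  have len: "i < length ?E" "length ?E = Suc (length ?C)"
    using assms by auto
  have "pattern x (take i ks @ [a, b] @ drop (Suc i) ks) (take i ts @ [z] @ drop i ts)
      = interleave (take i ?E @ [replicate a x, replicate b x] @ drop (Suc i) ?E) (take i ?C @ [[z]] @ drop i ?C)"
    by (simp add: pattern_def assemble_def take_map drop_map)
  also have "\<dots> = left_of i ?E ?C @ replicate a x @ [z] @ replicate b x @ right_of i ?E ?C"
    by (rule interleave_split_block[OF len])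
  also have "\<dots> = assemble (?E[i := replicate a x @ [z] @ replicate b x]) ts"
    using interleave_update[OF len] by (simp add: assemble_def)
  finally show ?thesis .
qed

lemma holds_pattern_split_block:
  assumes h: "holds M (pattern x ks ts) (pattern x fs ts)"
    and "distinct ts" and "x \<notin> set ts" and "z \<notin> set ts" and "i < length ks"
    and len: "length ks = Suc (length ts)" "length fs = Suc (length ts)"
  shows "holds M (pattern x (take i ks @ [1, ks ! i] @ drop (Suc i) ks) (take i ts @ [z] @ drop i ts))
           (pattern x (take i fs @ [1, fs ! i] @ drop (Suc i) fs) (take i ts @ [z] @ drop i ts))"
proof -
  let ?E = "map (\<lambda>k. replicate k x) ks" and ?F = "map (\<lambda>k. replicate k x) fs"
  have "holds M (assemble (?E[i := [x, z] @ ?E ! i]) ts) (assemble (?F[i := [x, z] @ ?F ! i]) ts)"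
    using h assms(2,3,5) len by (intro holds_prepend_block) (auto simp: pattern_def)
  then show ?thesis
    using pattern_split_block[of i ks ts x 1 "ks ! i" z] pattern_split_block[of i fs ts x 1 "fs ! i" z]
      assms(5) len by simp
qed

lemma interleave_framed_split_block:
  assumes "i < length LRs" and "length LRs = Suc (length C)" and "length ks = length LRs"
  shows "interleave (framed x (take i LRs @ [(L, []), ([], R)] @ drop (Suc i) LRs)
            (take i ks @ [1, ks ! i] @ drop (Suc i) ks)) (take i C @ [Q] @ drop i C)
       = interleave ((framed x LRs ks)[i := L @ [x] @ Q @ replicate (ks ! i) x @ R]) C"
proof -
  have len: "i < length (framed x LRs ks)" "length (framed x LRs ks) = Suc (length C)"
    using assms by auto
  have "framed x (take i LRs @ [(L, []), ([], R)] @ drop (Suc i) LRs) (take i ks @ [1, ks ! i] @ drop (Suc i) ks)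
      = take i (framed x LRs ks) @ [L @ [x], replicate (ks ! i) x @ R] @ drop (Suc i) (framed x LRs ks)"
    using framed_split_block[OF assms(1), of ks x "(L, [])" "([], R)" 1 "ks ! i"] assms(3) by simp
  then show ?thesis
    using interleave_split_block[OF len, of "L @ [x]" "replicate (ks ! i) x @ R" Q]
      interleave_update[OF len, of "L @ [x] @ Q @ replicate (ks ! i) x @ R"] by simp
qed

lemma derives_Gamma_split_block:
  assumes "distinct ts" and "x \<notin> set ts" and i: "i < length LRs"
    and len: "length LRs = Suc (length ts)" "length ks = length LRs" "length fs = length LRs"
    and h: "holds M (pattern x ks ts) (pattern x fs ts)"
  shows "derives (Gamma M)
           (assemble ((framed x LRs ks)[i := L @ [x] @ Q @ replicate (ks ! i) x @ R]) ts)
           (assemble ((framed x LRs fs)[i := L @ [x] @ Q @ replicate (fs ! i) x @ R]) ts)"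
proof -
  \<comment> \<open>\<open>Q\<close> is the image of a fresh simple letter \<open>z\<close> placed between the two \<open>x\<close>-runs of block \<open>i\<close>\<close>
  obtain z where z: "z \<notin> insert x (set ts)"
    using ex_new_if_finite[OF infinite_UNIV_nat, of "insert x (set ts)"] by blast
  let ?C = "map (\<lambda>t. [t]) ts" and ?ts' = "take i ts @ [z] @ drop i ts"
  let ?split = "\<lambda>ks. take i ks @ [1, ks ! i] @ drop (Suc i) ks"
  have "distinct ?ts'" and "x \<notin> set ?ts'"
    using z assms(1,2) set_take_subset[of i ts] set_drop_subset[of i ts]
      set_take_disj_set_drop_if_distinct[of ts i i]
    by auto
  moreover have "holds M (pattern x (?split ks) ?ts') (pattern x (?split fs) ?ts')"
    using h assms(1,2) z i len by (intro holds_pattern_split_block) auto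
  ultimately have "derives (Gamma M)
      (interleave (framed x (take i LRs @ [(L, []), ([], R)] @ drop (Suc i) LRs) (?split ks)) (take i ?C @ [Q] @ drop i ?C))
      (interleave (framed x (take i LRs @ [(L, []), ([], R)] @ drop (Suc i) LRs) (?split fs)) (take i ?C @ [Q] @ drop i ?C))"
    using i len by (intro derives_Gamma_framed) auto
  then show ?thesis
    using interleave_framed_split_block[of i LRs ?C ks x L R Q]
      interleave_framed_split_block[of i LRs ?C fs x L R Q] i len
    by (simp add: assemble_def)
qed

section \<open>Adjusting the occurrences of a single letter\<close>

definition same_off :: "nat \<Rightarrow> word list \<Rightarrow> word list \<Rightarrow> bool" where
  "same_off x bs bs' \<longleftrightarrow> list_all2 (\<lambda>B B'. restr B (- {x}) = restr B' (- {x})) bs bs'"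

lemma same_off_refl: "same_off x bs bs"
  by (simp add: same_off_def list_all2_refl)

lemma same_off_trans: "same_off x bs bs' \<Longrightarrow> same_off x bs' bs'' \<Longrightarrow> same_off x bs bs''"
  unfolding same_off_def by (rule list_all2_trans) auto

lemma same_off_length: "same_off x bs bs' \<Longrightarrow> length bs' = length bs"
  by (simp add: same_off_def list_all2_lengthD)

lemma same_off_nth: "same_off x bs bs' \<Longrightarrow> j < length bs \<Longrightarrow> restr (bs' ! j) (- {x}) = restr (bs ! j) (- {x})"
  by (simp add: same_off_def list_all2_conv_all_nth)

lemma same_off_iff_nth:
  "same_off x bs bs' \<longleftrightarrow> length bs' = length bs \<and>
     (\<forall>j < length bs. restr (bs' ! j) (- {x}) = restr (bs ! j) (- {x}))"
  by (auto simp: same_off_def list_all2_conv_all_nth)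

lemma same_off_update:
  assumes "same_off x bs bs'" and "restr B (- {x}) = restr (bs' ! i) (- {x})"
  shows "same_off x bs (bs'[i := B])"
  unfolding same_off_iff_nth
proof (intro conjI allI impI)
  show "length (bs'[i := B]) = length bs"
    using same_off_length[OF assms(1)] by simp
  show "restr (bs'[i := B] ! j) (- {x}) = restr (bs ! j) (- {x})" if "j < length bs" for j
    using that assms same_off_nth[OF assms(1)] same_off_length[OF assms(1)]
    by (cases "j = i") simp_all
qed

lemma block_counts_same_off:
  assumes "same_off x bs bs'" and "y \<noteq> x"
  shows "block_counts bs' y = block_counts bs y"
proof (rule nth_equalityI)
  show "length (block_counts bs' y) = length (block_counts bs y)"
    using same_off_length[OF assms(1)] by (simp add: block_counts_def)
  show "block_counts bs' y ! j = block_counts bs y ! j" if "j < length (block_counts bs' y)" for j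
  proof -
    have "j < length bs"
      using that same_off_length[OF assms(1)] by (simp add: block_counts_def)
    then have "count_list (bs' ! j) y = count_list (bs ! j) y"
      using same_off_nth[OF assms(1)] count_list_restr_other[OF assms(2)] by metis
    then show ?thesis
      using \<open>j < length bs\<close> same_off_length[OF assms(1)] by (simp add: block_counts_def)
  qed
qed

lemma set_same_off: "same_off x bs bs' \<Longrightarrow> j < length bs \<Longrightarrow> set (bs' ! j) \<subseteq> insert x (set (bs ! j))"
  using same_off_nth[of x bs bs' j] set_restr[of "bs' ! j" "- {x}"] set_restr[of "bs ! j" "- {x}"]
  by auto

lemma block_form_same_off:
  assumes bf: "block_form bs ts" and "x \<notin> set ts" and same: "same_off x bs bs'"
    and "sum_list (block_counts bs' x) \<noteq> 1"
  shows "block_form bs' ts"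
proof -
  have "set B' \<inter> set ts = {}" if B'_in: "B' \<in> set bs'" for B'
  proof -
    obtain j where "j < length bs'" and B': "B' = bs' ! j"
      using B'_in unfolding in_set_conv_nth by blast
    then have j: "j < length bs"
      using same_off_length[OF same] by simp
    have "set (bs ! j) \<inter> set ts = {}"
      using bf j by (simp add: block_form_def)
    then show ?thesis
      using set_same_off[OF same j] B' \<open>x \<notin> set ts\<close> by auto
  qed
  moreover have "sum_list (block_counts bs' y) \<noteq> 1" for y
  proof (cases "y = x")
    case False
    then show ?thesis
      using bf block_counts_same_off[OF same False] by (simp add: block_form_def)
  qed (use assms in simp)
  ultimately show ?thesis
    using bf same_off_length[OF same] by (simp add: block_form_def)
qed

lemma count_list_assemble_same_off:
  "same_off x bs bs' \<Longrightarrow> y \<noteq> x \<Longrightarrow> length bs = Suc (length ts) \<Longrightarrow>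
   count_list (assemble bs' ts) y = count_list (assemble bs ts) y"
  by (simp add: count_list_assemble same_off_length block_counts_same_off)

definition x_contiguous :: "nat \<Rightarrow> word \<Rightarrow> bool" where
  "x_contiguous x B \<longleftrightarrow> (\<exists>L R. B = L @ replicate (count_list B x) x @ R \<and> x \<notin> set L \<and> x \<notin> set R)"

definition frames :: "nat \<Rightarrow> word list \<Rightarrow> (word \<times> word) list \<Rightarrow> nat set \<Rightarrow> bool" where
  "frames x bs LRs J \<longleftrightarrow> length LRs = length bs \<and> (\<forall>j \<in> J. j < length bs \<longrightarrow>
     bs ! j = fst (LRs ! j) @ replicate (count_list (bs ! j) x) x @ snd (LRs ! j) \<and>
     x \<notin> set (fst (LRs ! j)) \<and> x \<notin> set (snd (LRs ! j)))"

lemma x_contiguous_if_count_list_le_1: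
  assumes "count_list B x \<le> 1"
  shows "x_contiguous x B"
proof (cases "count_list B x")
  case 0
  then show ?thesis
    unfolding x_contiguous_def by (intro exI[of _ B] exI[of _ "[]"]) (simp add: count_list_0_iff)
next
  case (Suc n)
  then have "0 < count_list B x"
    by simp
  then obtain L R where "B = L @ x # R" and "x \<notin> set L" and "count_list R x = count_list B x - 1"
    by (rule split_first_occurrence)
  moreover have "count_list B x - 1 = 0"
    using assms by simp
  ultimately show ?thesis
    unfolding x_contiguous_def by (intro exI[of _ L] exI[of _ R]) (simp add: count_list_0_iff)
qed

lemma frames_exist:
  assumes "\<forall>j \<in> J. j < length bs \<longrightarrow> x_contiguous x (bs ! j)"
  obtains LRs where "frames x bs LRs J"
proof -
  have "\<forall>j < length bs. \<exists>p. j \<in> J \<longrightarrow>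
      bs ! j = fst p @ replicate (count_list (bs ! j) x) x @ snd p \<and> x \<notin> set (fst p) \<and> x \<notin> set (snd p)"
    using assms by (auto simp: x_contiguous_def)
  then obtain f where "\<forall>j < length bs. j \<in> J \<longrightarrow>
      bs ! j = fst (f j) @ replicate (count_list (bs ! j) x) x @ snd (f j) \<and>
      x \<notin> set (fst (f j)) \<and> x \<notin> set (snd (f j))"
    by metis
  then have "frames x bs (map f [0..<length bs]) J"
    by (simp add: frames_def)
  then show ?thesis
    by (rule that)
qed

lemma framed_nth:
  assumes fr: "frames x bs LRs J" and "length fs = length bs" and "j \<in> J" and "j < length bs"
  shows "restr (framed x LRs fs ! j) (- {x}) = restr (bs ! j) (- {x})"
    and "count_list (framed x LRs fs ! j) x = fs ! j"
    and "x_contiguous x (framed x LRs fs ! j)"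
proof -
  have len: "length LRs = length bs"
    using fr by (simp add: frames_def)
  have bj: "bs ! j = fst (LRs ! j) @ replicate (count_list (bs ! j) x) x @ snd (LRs ! j)"
    and x: "x \<notin> set (fst (LRs ! j))" "x \<notin> set (snd (LRs ! j))"
    using fr assms(3,4) by (auto simp: frames_def)
  have nth: "framed x LRs ks ! j = fst (LRs ! j) @ replicate (ks ! j) x @ snd (LRs ! j)"
    if "length ks = length bs" for ks
    using nth_framed[of j LRs ks x] that assms(4) len by simp
  show "restr (framed x LRs fs ! j) (- {x}) = restr (bs ! j) (- {x})"
    using nth[OF assms(2)] bj by (metis restr_append restr_remove_replicate append_Nil)
  show "count_list (framed x LRs fs ! j) x = fs ! j"
    using nth[OF assms(2)] x by simp
  then show "x_contiguous x (framed x LRs fs ! j)"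
    using nth[OF assms(2)] x unfolding x_contiguous_def by metis
qed

lemma framed_block_counts_nth:
  assumes "frames x bs LRs J" and "j \<in> J" and "j < length bs"
  shows "framed x LRs (block_counts bs x) ! j = bs ! j"
  using assms nth_framed[of j LRs "block_counts bs x" x] by (simp add: frames_def block_counts_def)

lemma same_off_framed_update:
  assumes fr: "frames x bs LRs (- {i})" and len_fs: "length fs = length bs"
    and "restr B (- {x}) = restr (bs ! i) (- {x})"
  shows "same_off x bs ((framed x LRs fs)[i := B])"
  unfolding same_off_iff_nth
proof (intro conjI allI impI)
  show "length ((framed x LRs fs)[i := B]) = length bs"
    using fr len_fs by (simp add: frames_def)
  show "restr ((framed x LRs fs)[i := B] ! j) (- {x}) = restr (bs ! j) (- {x})" if "j < length bs" for j
    using that assms(3) framed_nth(1)[OF fr len_fs, of j] fr len_fs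
    by (cases "j = i") (simp_all add: frames_def)
qed

lemma block_counts_framed_update:
  assumes fr: "frames x bs LRs (- {i})" and len_fs: "length fs = length bs"
  shows "block_counts ((framed x LRs fs)[i := B]) x = fs[i := count_list B x]"
proof (rule nth_equalityI)
  show "length (block_counts ((framed x LRs fs)[i := B]) x) = length (fs[i := count_list B x])"
    using fr len_fs by (simp add: frames_def block_counts_def)
  show "block_counts ((framed x LRs fs)[i := B]) x ! j = fs[i := count_list B x] ! j"
    if "j < length (block_counts ((framed x LRs fs)[i := B]) x)" for j
    using that framed_nth(2)[OF fr len_fs, of j] fr len_fs
    by (cases "j = i") (simp_all add: frames_def block_counts_def)
qed

lemma adjust_contiguous:
  assumes bf: "block_form bs ts" and "x \<notin> set ts" and contig: "\<forall>B \<in> set bs. x_contiguous x B"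
    and len: "length fs = length bs" and h: "holds M (pattern x (block_counts bs x) ts) (pattern x fs ts)"
  obtains bs' where "derives (Gamma M) (assemble bs ts) (assemble bs' ts)"
    and "same_off x bs bs'" and "block_counts bs' x = fs"
proof -
  obtain LRs where fr: "frames x bs LRs UNIV"
    using frames_exist[of UNIV bs x] contig by auto
  have lens: "length LRs = length bs" "length bs = Suc (length ts)"
    using fr bf by (simp_all add: frames_def block_form_def)
  have "framed x LRs (block_counts bs x) = bs"
    using framed_block_counts_nth[OF fr] lens by (intro nth_equalityI) (auto simp: block_counts_def)
  moreover have "derives (Gamma M) (interleave (framed x LRs (block_counts bs x)) (map (\<lambda>t. [t]) ts))
      (interleave (framed x LRs fs) (map (\<lambda>t. [t]) ts))"
    using bf assms(2) lens len h by (intro derives_Gamma_framed) (auto simp: block_form_def block_counts_def)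
  ultimately have "derives (Gamma M) (assemble bs ts) (assemble (framed x LRs fs) ts)"
    by (simp add: assemble_def)
  moreover have "same_off x bs (framed x LRs fs)"
    using framed_nth(1)[OF fr len] lens len by (simp add: same_off_iff_nth)
  moreover have "block_counts (framed x LRs fs) x = fs"
    using framed_nth(2)[OF fr len] lens len by (intro nth_equalityI) (simp_all add: block_counts_def)
  ultimately show ?thesis
    by (rule that)
qed

lemma derives_split_block:
  assumes E: "Sigma0 \<subseteq> E" "Gamma M \<subseteq> E"
    and bf: "block_form bs ts" and "x \<notin> set ts" and i: "i < length bs"
    and bi: "bs ! i = L @ [x] @ Q @ [x] @ R" and x: "x \<notin> set L" "x \<notin> set Q" "x \<notin> set R"
    and fr: "frames x bs LRs (- {i})" and len_fs: "length fs = length bs"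
    and h: "holds M (pattern x (block_counts bs x) ts) (pattern x fs ts)"
  shows "derives E (assemble bs ts)
           (assemble ((framed x LRs fs)[i := L @ [x] @ Q @ replicate (fs ! i) x @ R]) ts)"
proof -
  let ?C = "map (\<lambda>t. [t]) ts" and ?e = "block_counts bs x"
  have len: "length bs = Suc (length ?C)" "length LRs = length bs" "length ?e = length bs"
    using bf fr by (simp_all add: block_form_def frames_def block_counts_def)
  define B2 where "B2 = L @ [x] @ Q @ replicate (?e ! i) x @ R"
  have B2: "B2 = L @ [x] @ Q @ [x, x] @ R"
    using i bi x by (simp add: B2_def block_counts_def numeral_2_eq_2)
  have "assemble bs ts = (left_of i bs ?C @ L @ [x] @ Q) @ [x] @ (R @ right_of i bs ?C)"
    using interleave_split_at[OF i len(1)] bi by (simp add: assemble_def)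
  moreover have "assemble (bs[i := B2]) ts = (left_of i bs ?C @ L @ [x] @ Q) @ [x, x] @ (R @ right_of i bs ?C)"
    using interleave_update[OF i len(1)] B2 by (simp add: assemble_def)
  ultimately have "derives E (assemble bs ts) (assemble (bs[i := B2]) ts)"
    using derives_double[OF E(1), of x "left_of i bs ?C @ L @ [x] @ Q"] by simp
  also have "bs[i := B2] = (framed x LRs ?e)[i := B2]"
  proof (rule nth_equalityI)
    show "length (bs[i := B2]) = length ((framed x LRs ?e)[i := B2])"
      using len by simp
    show "bs[i := B2] ! j = (framed x LRs ?e)[i := B2] ! j" if "j < length (bs[i := B2])" for j
      using that framed_block_counts_nth[OF fr, of j] len by (cases "j = i") auto
  qed
  also have "derives E (assemble \<dots> ts)
      (assemble ((framed x LRs fs)[i := L @ [x] @ Q @ replicate (fs ! i) x @ R]) ts)"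
    unfolding B2_def using bf \<open>x \<notin> set ts\<close> i len len_fs h
    by (intro derives_mono[OF derives_Gamma_split_block E(2)]) (simp_all add: block_form_def)
  finally show ?thesis .
qed

lemma adjust_split:
  assumes E: "Sigma0 \<subseteq> E" "Gamma M \<subseteq> E"
    and bf: "block_form bs ts" and "x \<notin> set ts" and i: "i < length bs"
    and two: "count_list (bs ! i) x = 2" and contig: "\<forall>j < length bs. j \<noteq> i \<longrightarrow> x_contiguous x (bs ! j)"
    and len_fs: "length fs = length bs"
    and h: "holds M (pattern x (block_counts bs x) ts) (pattern x fs ts)"
  obtains L Q R bs' where "bs ! i = L @ [x] @ Q @ [x] @ R" and "x \<notin> set L" "x \<notin> set Q" "x \<notin> set R"
    and "bs' ! i = L @ [x] @ Q @ replicate (fs ! i) x @ R"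
    and "derives E (assemble bs ts) (assemble bs' ts)" and "same_off x bs bs'"
    and "block_counts bs' x = fs[i := Suc (fs ! i)]"
    and "\<forall>j < length bs. j \<noteq> i \<longrightarrow> x_contiguous x (bs' ! j)"
proof -
  obtain L Q R where bi: "bs ! i = L @ [x] @ Q @ [x] @ R" and x: "x \<notin> set L" "x \<notin> set Q" "x \<notin> set R"
    using split_exactly_two_occurrences[OF two] by blast
  obtain LRs where fr: "frames x bs LRs (- {i})"
    using frames_exist[of "- {i}" bs x] contig by auto
  define B where "B = L @ [x] @ Q @ replicate (fs ! i) x @ R"
  have "((framed x LRs fs)[i := B]) ! i = B"
    using fr i len_fs by (simp add: frames_def)
  moreover have "derives E (assemble bs ts) (assemble ((framed x LRs fs)[i := B]) ts)"
    unfolding B_def by (rule derives_split_block[OF E bf \<open>x \<notin> set ts\<close> i bi x fr len_fs h])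
  moreover have "same_off x bs ((framed x LRs fs)[i := B])"
    using bi x by (intro same_off_framed_update[OF fr len_fs]) (simp add: B_def restr_Cons)
  moreover have "block_counts ((framed x LRs fs)[i := B]) x = fs[i := Suc (fs ! i)]"
    using block_counts_framed_update[OF fr len_fs, of B] x by (simp add: B_def)
  moreover have "\<forall>j < length bs. j \<noteq> i \<longrightarrow> x_contiguous x (((framed x LRs fs)[i := B]) ! j)"
    using framed_nth(3)[OF fr len_fs] by simp
  ultimately show ?thesis
    using that bi x by (simp add: B_def)
qed

lemma not_contiguous_compact:
  assumes "\<not> (\<forall>B \<in> set bs. x_contiguous x B)" and compact: "compact_counts (block_counts bs x)"
  shows "first_pos (block_counts bs x) < length bs"
    and "count_list (bs ! first_pos (block_counts bs x)) x = 2"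
    and "\<forall>j < length bs. j \<noteq> first_pos (block_counts bs x) \<longrightarrow> count_list (bs ! j) x \<le> 1"
proof -
  let ?i = "first_pos (block_counts bs x)"
  have le: "count_list (bs ! j) x \<le> (if j = ?i then 2 else 1)" if "j < length bs" for j
    using compact that by (simp add: compact_counts_def block_counts_def)
  obtain j where j: "j < length bs" and "\<not> x_contiguous x (bs ! j)"
    using assms(1) by (metis in_set_conv_nth)
  then have "\<not> count_list (bs ! j) x \<le> 1"
    using x_contiguous_if_count_list_le_1 by blast
  then have "j = ?i" and "count_list (bs ! j) x = 2"
    using le[OF j] by (auto split: if_splits)
  then show "?i < length bs" and "count_list (bs ! ?i) x = 2"
    using j by simp_all
  show "\<forall>j < length bs. j \<noteq> ?i \<longrightarrow> count_list (bs ! j) x \<le> 1"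
  proof (intro allI impI)
    fix j
    assume "j < length bs" and "j \<noteq> ?i"
    then show "count_list (bs ! j) x \<le> 1"
      using le[of j] by simp
  qed
qed

lemma shrink_split_block:
  assumes E: "Sigma0 \<subseteq> E" and bf: "block_form bs ts" and same: "same_off x bs bs1"
    and i: "i < length bs" and bi: "bs ! i = L @ [x] @ Q @ [x] @ R"
    and x: "x \<notin> set L" "x \<notin> set Q" "x \<notin> set R"
    and b1i: "bs1 ! i = L @ [x] @ Q @ replicate k x @ R"
    and k: "k = 2 \<or> k = 1 \<and> (\<exists>j < i. x \<in> set (bs1 ! j))"
  obtains B where "derives E (assemble bs1 ts) (assemble (bs1[i := B]) ts)"
    and "same_off x bs (bs1[i := B])" and "count_list B x = k"
proof -
  let ?C = "map (\<lambda>t. [t]) ts"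
  have len1: "length bs1 = Suc (length ?C)" "i < length bs1"
    using same_off_length[OF same] bf i by (simp_all add: block_form_def)
  have split1: "assemble (bs1[i := B]) ts = left_of i bs1 ?C @ B @ right_of i bs1 ?C" for B
    using interleave_update[OF len1(2,1)] by (simp add: assemble_def)
  have "assemble bs1 ts = left_of i bs1 ?C @ bs1 ! i @ right_of i bs1 ?C"
    using split1[of "bs1 ! i"] by simp
  have same_B: "same_off x bs (bs1[i := B])" if "restr B (- {x}) = L @ Q @ R" for B
    using same_off_update[OF same] that b1i x by (simp add: restr_Cons)
  from k consider (two) "k = 2" | (one) j where "k = 1" "j < i" "x \<in> set (bs1 ! j)"
    by blast
  then show ?thesis
  proof cases
    case two
    let ?B = "L @ [x] @ Q @ [x] @ R"
    have "derives E (assemble bs1 ts) (assemble (bs1[i := ?B]) ts)"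
      using derives.sym[OF derives_double[OF E, of x "left_of i bs1 ?C @ L @ [x] @ Q" "R @ right_of i bs1 ?C"]]
        split1 \<open>assemble bs1 ts = _\<close> b1i two by (simp add: numeral_2_eq_2)
    then show ?thesis
      using that same_B[of ?B] x two by (simp add: restr_Cons)
  next
    case one
    let ?B = "L @ Q @ [x] @ R"
    have "same_off x bs (bs1[i := ?B])"
      using same_B x by (simp add: restr_Cons)
    have "x \<in> set (left_of i bs1 ?C)"
      using set_left_of[OF \<open>j < i\<close> len1(2,1)] one(3) by auto
    moreover have "2 \<le> count_list (assemble (bs1[i := ?B]) ts) y" if "y \<in> set Q" for y
    proof -
      have "y \<noteq> x"
        using that x by auto
      then have "count_list (assemble (bs1[i := ?B]) ts) y = count_list (assemble bs ts) y"
        using count_list_assemble_same_off[OF \<open>same_off x bs (bs1[i := ?B])\<close>] bf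
        by (simp add: block_form_def)
      moreover have "2 \<le> count_list (assemble bs ts) y"
        using two_le_count_list_assemble[OF bf nth_mem[OF i]] bi that by simp
      ultimately show ?thesis
        by simp
    qed
    ultimately have "derives E (assemble bs1 ts) (assemble (bs1[i := ?B]) ts)"
      using derives.sym[OF derives_copy_left[OF E, of x "left_of i bs1 ?C @ L" Q "R @ right_of i bs1 ?C"]]
        split1 \<open>assemble bs1 ts = _\<close> b1i one(1) by simp
    then show ?thesis
      using that \<open>same_off x bs (bs1[i := ?B])\<close> x one(1) by simp
  qed
qed

lemma adjust_from_contiguous:
  assumes sig: "\<forall>(s, t) \<in> Sigma0. holds M s t"
    and bfW: "block_form bsW ts" and bfT: "block_form bsT ts" and "x \<notin> set ts"
    and h: "holds M (assemble bsW ts) (assemble bsT ts)"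
    and d1: "derives (Sigma0 \<union> Gamma M) (assemble bsW ts) (assemble bs1 ts)" and same1: "same_off x bsW bs1"
    and contig1: "\<forall>B \<in> set bs1. x_contiguous x B" and "sum_list (block_counts bs1 x) \<noteq> 1"
  obtains bs' where "derives (Sigma0 \<union> Gamma M) (assemble bsW ts) (assemble bs' ts)"
    and "same_off x bsW bs'" and "block_counts bs' x = block_counts bsT x"
proof -
  have bf1: "block_form bs1 ts"
    by (rule block_form_same_off[OF bfW \<open>x \<notin> set ts\<close> same1 \<open>sum_list _ \<noteq> 1\<close>])
  have "holds M (assemble bs1 ts) (assemble bsT ts)"
    by (rule holds_along_derives[OF sig h d1 derives.refl])
  then have "holds M (pattern x (block_counts bs1 x) ts) (pattern x (block_counts bsT x) ts)"
    using holds_pattern bf1 bfT \<open>x \<notin> set ts\<close> by blast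
  moreover have "length (block_counts bsT x) = length bs1"
    using bf1 bfT by (simp add: block_form_def block_counts_def)
  ultimately obtain bs2 where "derives (Gamma M) (assemble bs1 ts) (assemble bs2 ts)"
    and "same_off x bs1 bs2" and "block_counts bs2 x = block_counts bsT x"
    using adjust_contiguous[OF bf1 \<open>x \<notin> set ts\<close> contig1] by blast
  then show ?thesis
    using that d1 derives_mono[of "Gamma M" _ _ "Sigma0 \<union> Gamma M"] same_off_trans[OF same1]
    by (meson derives.trans sup_ge2)
qed

lemma adjust_noncontiguous:
  assumes sig: "\<forall>(s, t) \<in> Sigma0. holds M s t"
    and bfW: "block_form bsW ts" and bfT: "block_form bsT ts" and "x \<notin> set ts"
    and h: "holds M (assemble bsW ts) (assemble bsT ts)"
    and cW: "compact_counts (block_counts bsW x)" and cT: "compact_counts (block_counts bsT x)"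
    and ncW: "\<not> (\<forall>B \<in> set bsW. x_contiguous x B)" and ncT: "\<not> (\<forall>B \<in> set bsT. x_contiguous x B)"
  obtains bs' where "derives (Sigma0 \<union> Gamma M) (assemble bsW ts) (assemble bs' ts)"
    and "same_off x bsW bs'" and "block_counts bs' x = block_counts bsT x"
proof -
  let ?fs = "block_counts bsT x" and ?i = "first_pos (block_counts bsW x)" and ?k = "first_pos (block_counts bsT x)"
  have len: "length bsW = Suc (length ts)" "length ?fs = length bsW"
    using bfW bfT by (simp_all add: block_form_def block_counts_def)
  note W = not_contiguous_compact[OF ncW cW] and T = not_contiguous_compact[OF ncT cT]
  have fs_k: "?k < length bsW" "?fs ! ?k = 2" "\<forall>j < length bsW. j \<noteq> ?k \<longrightarrow> ?fs ! j \<le> 1"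
    using T len by (simp_all add: block_counts_def)
  have contigW: "\<forall>j < length bsW. j \<noteq> ?i \<longrightarrow> x_contiguous x (bsW ! j)"
    using W(3) x_contiguous_if_count_list_le_1 by blast
  have hpat: "holds M (pattern x (block_counts bsW x) ts) (pattern x ?fs ts)"
    by (rule holds_pattern[OF h bfW bfT \<open>x \<notin> set ts\<close>])
  obtain L Q R bs1 where bi: "bsW ! ?i = L @ [x] @ Q @ [x] @ R"
    and x: "x \<notin> set L" "x \<notin> set Q" "x \<notin> set R"
    and b1i: "bs1 ! ?i = L @ [x] @ Q @ replicate (?fs ! ?i) x @ R"
    and d1: "derives (Sigma0 \<union> Gamma M) (assemble bsW ts) (assemble bs1 ts)" and same1: "same_off x bsW bs1"
    and counts1: "block_counts bs1 x = ?fs[?i := Suc (?fs ! ?i)]"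
    and contig1: "\<forall>j < length bsW. j \<noteq> ?i \<longrightarrow> x_contiguous x (bs1 ! j)"
    by (rule adjust_split[OF Un_upper1 Un_upper2 bfW \<open>x \<notin> set ts\<close> W(1,2) contigW len(2) hpat])
  have len1: "length bs1 = length bsW"
    using same_off_length[OF same1] .
  show ?thesis
  proof (cases "?fs ! ?i = 0")
    case True
    have "x_contiguous x (bs1 ! ?i)"
      using b1i True x unfolding x_contiguous_def by (intro exI[of _ L] exI[of _ "Q @ R"]) simp
    then have "\<forall>B \<in> set bs1. x_contiguous x B"
      using contig1 len1 by (metis in_set_conv_nth)
    moreover have "2 \<le> block_counts bs1 x ! ?k"
      using True counts1 fs_k by (cases "?k = ?i") auto
    then have "sum_list (block_counts bs1 x) \<noteq> 1"
      using elem_le_sum_list[of ?k "block_counts bs1 x"] fs_k counts1 len by simp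
    ultimately show ?thesis
      using adjust_from_contiguous[OF sig bfW bfT \<open>x \<notin> set ts\<close> h d1 same1] that by blast
  next
    case False
    have "?fs ! ?i = 2 \<or> ?fs ! ?i = 1 \<and> (\<exists>j < ?i. x \<in> set (bs1 ! j))"
    proof (cases "?i = ?k")
      case False
      then have "?k < ?i" and "?fs ! ?i = 1"
        using \<open>?fs ! ?i \<noteq> 0\<close> fs_k first_pos_spec(3)[of ?i ?fs] W(1) len by fastforce+
      moreover have "block_counts bs1 x ! ?k = 2"
        using counts1 fs_k False by simp
      then have "x \<in> set (bs1 ! ?k)"
        using fs_k len len1 count_list_pos_iff[of "bs1 ! ?k" x] by (simp add: block_counts_def)
      ultimately show ?thesis
        by blast
    qed (use fs_k in simp)
    then obtain B where d2: "derives (Sigma0 \<union> Gamma M) (assemble bs1 ts) (assemble (bs1[?i := B]) ts)"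
      and "same_off x bsW (bs1[?i := B])" and "count_list B x = ?fs ! ?i"
      using shrink_split_block[OF Un_upper1 bfW same1 W(1) bi x b1i] by blast
    moreover have "block_counts (bs1[?i := B]) x = ?fs"
      using counts1 \<open>count_list B x = ?fs ! ?i\<close> by (simp add: block_counts_update)
    ultimately show ?thesis
      using that derives.trans[OF d1 d2] by blast
  qed
qed

(* If only bsW has a non-contiguous x-block, the split block L x Q x R may have to lose its first
   x although no earlier x is available to Sigma; hence the hypothesis contig. *)
lemma adjust_counts:
  assumes sig: "\<forall>(s, t) \<in> Sigma0. holds M s t"
    and bfW: "block_form bsW ts" and bfT: "block_form bsT ts" and "x \<notin> set ts"
    and h: "holds M (assemble bsW ts) (assemble bsT ts)"
    and cW: "compact_counts (block_counts bsW x)" and cT: "compact_counts (block_counts bsT x)"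
    and contig: "(\<forall>B \<in> set bsW. x_contiguous x B) \<or> \<not> (\<forall>B \<in> set bsT. x_contiguous x B)"
  obtains bs' where "derives (Sigma0 \<union> Gamma M) (assemble bsW ts) (assemble bs' ts)"
    and "same_off x bsW bs'" and "block_counts bs' x = block_counts bsT x"
proof (cases "\<forall>B \<in> set bsW. x_contiguous x B")
  case True
  then show ?thesis
    using adjust_from_contiguous[OF sig bfW bfT \<open>x \<notin> set ts\<close> h derives.refl same_off_refl] bfW that
    by (auto simp: block_form_def)
next
  case False
  then show ?thesis
    using adjust_noncontiguous[OF sig bfW bfT \<open>x \<notin> set ts\<close> h cW cT False] contig that by blast
qed

lemma adjust_counts_compact:
  assumes sig: "\<forall>(s, t) \<in> Sigma0. holds M s t"
    and bfW: "block_form bsW ts" and bfT: "block_form bsT ts" and "x \<notin> set ts"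
    and h: "holds M (assemble bsW ts) (assemble bsT ts)"
    and cW: "compact_blocks bsW" and cT: "compact_blocks bsT"
    and contig: "(\<forall>B \<in> set bsW. x_contiguous x B) \<or> \<not> (\<forall>B \<in> set bsT. x_contiguous x B)"
  obtains bs' where "block_form bs' ts" and "compact_blocks bs'"
    and "derives (Sigma0 \<union> Gamma M) (assemble bsW ts) (assemble bs' ts)"
    and "block_counts bs' x = block_counts bsT x"
    and "\<forall>y. y \<noteq> x \<longrightarrow> block_counts bs' y = block_counts bsW y"
proof -
  obtain bs' where d: "derives (Sigma0 \<union> Gamma M) (assemble bsW ts) (assemble bs' ts)"
    and same: "same_off x bsW bs'" and counts: "block_counts bs' x = block_counts bsT x"
    using adjust_counts[OF sig bfW bfT \<open>x \<notin> set ts\<close> h _ _ contig] cW cT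
    by (metis compact_blocks_def)
  have "block_form bs' ts"
    using block_form_same_off[OF bfW \<open>x \<notin> set ts\<close> same] counts bfT by (simp add: block_form_def)
  moreover have others: "\<forall>y. y \<noteq> x \<longrightarrow> block_counts bs' y = block_counts bsW y"
    using block_counts_same_off[OF same] by blast
  moreover have "compact_blocks bs'"
    using cW cT counts others unfolding compact_blocks_def by metis
  ultimately show ?thesis
    using that d counts by blast
qed

lemma equalize_counts:
  assumes sig: "\<forall>(s, t) \<in> Sigma0. holds M s t"
    and bfU: "block_form bsU ts" and bfV: "block_form bsV ts" and "x \<notin> set ts"
    and h: "holds M (assemble bsU ts) (assemble bsV ts)"
    and cU: "compact_blocks bsU" and cV: "compact_blocks bsV"
  obtains bsU' bsV' where "block_form bsU' ts" and "block_form bsV' ts"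
    and "compact_blocks bsU'" and "compact_blocks bsV'"
    and "derives (Sigma0 \<union> Gamma M) (assemble bsU ts) (assemble bsU' ts)"
    and "derives (Sigma0 \<union> Gamma M) (assemble bsV ts) (assemble bsV' ts)"
    and "block_counts bsU' x = block_counts bsV' x"
    and "\<forall>y. y \<noteq> x \<longrightarrow> block_counts bsU' y = block_counts bsU y \<and> block_counts bsV' y = block_counts bsV y"
proof (cases "(\<forall>B \<in> set bsV. x_contiguous x B) \<or> \<not> (\<forall>B \<in> set bsU. x_contiguous x B)")
  case True
  then obtain bs' where "block_form bs' ts" "compact_blocks bs'"
    "derives (Sigma0 \<union> Gamma M) (assemble bsV ts) (assemble bs' ts)"
    "block_counts bs' x = block_counts bsU x" "\<forall>y. y \<noteq> x \<longrightarrow> block_counts bs' y = block_counts bsV y"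
    using adjust_counts_compact[OF sig bfV bfU \<open>x \<notin> set ts\<close> holds_sym[OF h] cV cU] by blast
  then show ?thesis
    using that[of bsU bs'] bfU cU derives.refl by simp
next
  case False
  then obtain bs' where "block_form bs' ts" "compact_blocks bs'"
    "derives (Sigma0 \<union> Gamma M) (assemble bsU ts) (assemble bs' ts)"
    "block_counts bs' x = block_counts bsV x" "\<forall>y. y \<noteq> x \<longrightarrow> block_counts bs' y = block_counts bsU y"
    using adjust_counts_compact[OF sig bfU bfV \<open>x \<notin> set ts\<close> h cU cV] by blast
  then show ?thesis
    using that[of bs' bsV] bfV cV derives.refl by simp
qed

lemma equalize_counts_list:
  assumes sig: "\<forall>(s, t) \<in> Sigma0. holds M s t"
    and bfU: "block_form bsU ts" and bfV: "block_form bsV ts"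
    and h: "holds M (assemble bsU ts) (assemble bsV ts)"
    and cU: "compact_blocks bsU" and cV: "compact_blocks bsV"
    and "set xs \<inter> set ts = {}"
  obtains bsU' bsV' where "block_form bsU' ts" and "block_form bsV' ts"
    and "compact_blocks bsU'" and "compact_blocks bsV'"
    and "derives (Sigma0 \<union> Gamma M) (assemble bsU ts) (assemble bsU' ts)"
    and "derives (Sigma0 \<union> Gamma M) (assemble bsV ts) (assemble bsV' ts)"
    and "\<forall>x \<in> set xs. block_counts bsU' x = block_counts bsV' x"
  using \<open>set xs \<inter> set ts = {}\<close>
proof (induction xs arbitrary: thesis)
  case Nil
  show ?case
    using Nil(1)[OF bfU bfV cU cV derives.refl derives.refl] by simp
next
  case (Cons x xs)
  obtain bsU1 bsV1 where bf1: "block_form bsU1 ts" "block_form bsV1 ts"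
    and c1: "compact_blocks bsU1" "compact_blocks bsV1"
    and dU1: "derives (Sigma0 \<union> Gamma M) (assemble bsU ts) (assemble bsU1 ts)"
    and dV1: "derives (Sigma0 \<union> Gamma M) (assemble bsV ts) (assemble bsV1 ts)"
    and eq1: "\<forall>y \<in> set xs. block_counts bsU1 y = block_counts bsV1 y"
    using Cons.IH Cons.prems(2) by auto
  have "holds M (assemble bsU1 ts) (assemble bsV1 ts)"
    by (rule holds_along_derives[OF sig h dU1 dV1])
  then obtain bsU2 bsV2 where "block_form bsU2 ts" "block_form bsV2 ts"
    "compact_blocks bsU2" "compact_blocks bsV2"
    and dU2: "derives (Sigma0 \<union> Gamma M) (assemble bsU1 ts) (assemble bsU2 ts)"
    and dV2: "derives (Sigma0 \<union> Gamma M) (assemble bsV1 ts) (assemble bsV2 ts)"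
    and eq_x: "block_counts bsU2 x = block_counts bsV2 x"
    and others: "\<forall>y. y \<noteq> x \<longrightarrow> block_counts bsU2 y = block_counts bsU1 y \<and>
      block_counts bsV2 y = block_counts bsV1 y"
    using equalize_counts[OF sig bf1 _ _ c1] Cons.prems(2) by auto
  moreover have "\<forall>y \<in> set (x # xs). block_counts bsU2 y = block_counts bsV2 y"
    using eq_x others eq1 by auto
  ultimately show ?case
    using Cons.prems(1) derives.trans[OF dU1 dU2] derives.trans[OF dV1 dV2] by blast
qed

section \<open>The compact well-balanced identity\<close>

lemma finite_mul_letters: "finite (mul_letters w)"
  by (rule finite_subset[of _ "set w"]) (auto simp: mul_letters_def two_le_count_list_iff)

lemma compact_well_balanced_assemble:
  assumes bfU: "block_form bsU ts" and bfV: "block_form bsV ts"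
    and "compact_blocks bsU" and "compact_blocks bsV"
    and eq: "\<forall>x \<in> mul_letters (assemble bsU ts). block_counts bsU x = block_counts bsV x"
  shows "compact_id (assemble bsU ts, assemble bsV ts)"
    and "well_balanced (assemble bsU ts, assemble bsV ts)"
proof -
  let ?U = "assemble bsU ts" and ?V = "assemble bsV ts"
  have skeleton: "restr ?U (simp_letters ?U) = restr ?V (simp_letters ?V)"
    using block_form_restr_simp_letters[OF bfU] block_form_restr_simp_letters[OF bfV] by simp
  then show "compact_id (?U, ?V)"
    using assms(3,4) compact_assemble_iff[OF bfU] compact_assemble_iff[OF bfV]
    by (simp add: compact_id_def)
  have "restr ?U (insert x (simp_letters ?U)) = restr ?V (insert x (simp_letters ?U))"
    if x: "x \<in> mul_letters ?U" for x
  proof -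
    have "x \<notin> simp_letters ?U"
      using x by (auto simp: mul_letters_def simp_letters_def)
    then have "x \<notin> set ts"
      using block_form_simp_letters[OF bfU] by simp
    then show ?thesis
      using restr_assemble_pattern[OF bfU] restr_assemble_pattern[OF bfV] eq x
        block_form_simp_letters[OF bfU] by simp
  qed
  with skeleton show "well_balanced (?U, ?V)"
    by (simp add: well_balanced_def)
qed

lemma derives_compact_well_balanced:
  assumes iso: "isoterm M [0, 1]" and sig: "\<forall>(s, t) \<in> Sigma0. holds M s t" and h: "holds M u v"
  obtains U V where "derives (Sigma0 \<union> Gamma M) u U" and "derives (Sigma0 \<union> Gamma M) v V"
    and "compact_id (U, V)" and "well_balanced (U, V)"
proof -
  let ?E = "Sigma0 \<union> Gamma M"
  obtain u' v' where du: "derives ?E u u'" and "compact u'" and dv: "derives ?E v v'" and "compact v'"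
    using derives_compact[of ?E] by blast
  have h': "holds M u' v'"
    by (rule holds_along_derives[OF sig h du dv])
  define ts where "ts = restr u' (simp_letters u')"
  have bf: "block_form (blocks u') ts" "block_form (blocks v') ts"
    using block_form_blocks_restr[of u'] block_form_blocks_restr[of v']
      isoterm_xy_restr_simp_letters[OF iso h'] by (simp_all add: ts_def)
  have asm: "assemble (blocks u') ts = u'" "assemble (blocks v') ts = v'"
    using assemble_blocks[of u'] assemble_blocks[of v'] isoterm_xy_restr_simp_letters[OF iso h']
    by (simp_all add: ts_def)
  have "compact_blocks (blocks u')" "compact_blocks (blocks v')"
    using compact_assemble_iff[OF bf(1)] compact_assemble_iff[OF bf(2)] asm
      \<open>compact u'\<close> \<open>compact v'\<close> by simp_all
  moreover have "set (sorted_list_of_set (mul_letters u')) \<inter> set ts = {}"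
    using finite_mul_letters[of u'] set_restr_simp_letters[of u']
    by (auto simp: ts_def mul_letters_def simp_letters_def)
  ultimately obtain bsU bsV where bfUV: "block_form bsU ts" "block_form bsV ts"
    and "compact_blocks bsU" "compact_blocks bsV"
    and dU: "derives ?E u' (assemble bsU ts)" and dV: "derives ?E v' (assemble bsV ts)"
    and eq: "\<forall>x \<in> mul_letters u'. block_counts bsU x = block_counts bsV x"
    using equalize_counts_list[OF sig bf _ _ _, of "sorted_list_of_set (mul_letters u')"] h' asm
      finite_mul_letters[of u'] by auto
  have "mul_letters (assemble bsU ts) = mul_letters u'"
    using isoterm_xy_mul_letters[OF iso holds_if_derives_Sigma0_Gamma[OF sig dU]] by simp
  then have "compact_id (assemble bsU ts, assemble bsV ts)" "well_balanced (assemble bsU ts, assemble bsV ts)"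
    using compact_well_balanced_assemble[OF bfUV \<open>compact_blocks bsU\<close> \<open>compact_blocks bsV\<close>] eq by simp_all
  then show ?thesis
    using that derives.trans[OF du dU] derives.trans[OF dv dV] by blast
qed

theorem lemma3p4:
  fixes M :: "'m::monoid_mult itself" and u v :: word
  assumes "isoterm M [0, 1]"
    and "\<forall>(s, t) \<in> Sigma0. holds M s t"
    and "holds M u v"
  shows "\<exists>\<sigma>. holds M (fst \<sigma>) (snd \<sigma>) \<and> compact_id \<sigma> \<and> well_balanced \<sigma> \<and>
           derives ({\<sigma>} \<union> Sigma0 \<union> Gamma M) u v"
proof -
  obtain U V where dU: "derives (Sigma0 \<union> Gamma M) u U" and dV: "derives (Sigma0 \<union> Gamma M) v V"
    and "compact_id (U, V)" and "well_balanced (U, V)"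
    using derives_compact_well_balanced[OF assms] .
  have "holds M U V"
    by (rule holds_along_derives[OF assms(2,3) dU dV])
  moreover have "derives ({(U, V)} \<union> Sigma0 \<union> Gamma M) u v"
  proof -
    have sub: "Sigma0 \<union> Gamma M \<subseteq> {(U, V)} \<union> Sigma0 \<union> Gamma M"
      by blast
    have "derives ({(U, V)} \<union> Sigma0 \<union> Gamma M) u U"
      using derives_mono[OF dU sub] .
    also have "derives ({(U, V)} \<union> Sigma0 \<union> Gamma M) U V"
      by (rule derives_member) simp
    also have "derives ({(U, V)} \<union> Sigma0 \<union> Gamma M) V v"
      using derives.sym[OF derives_mono[OF dV sub]] .
    finally show ?thesis .
  qed
  ultimately show ?thesis
    using \<open>compact_id (U, V)\<close> \<open>well_balanced (U, V)\<close> by (intro exI[of _ "(U, V)"]) simp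
qed

end
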